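(* Let $(\mathcal{F},\sigma,\partial)\subset(\mathcal{M},\sigma,\partial)$ and $\mathcal{K}=\mathcal{F}^\sigma$ be as in one of the two settings below. Let $a_1,\dots,a_n$ be nonzero elements of $\mathcal{F}$ and let $z_1,\dots,z_n\in\mathcal{M}$ satisfy $\sigma(z_i)-z_i=a_i$ for $i=1,\dots,n$. Then $z_1,\dots,z_n$ satisfy a nontrivial algebraic $\partial$-differential relation over $\mathcal{F}$ (i.e. the family $\{\partial^k z_i\}_{k\ge0,\,1\le i\le n}$ is algebraically dependent over $\mathcal{F}$) if and only if there exist a nonzero homogeneous linear differential polynomial $L(Y_1,\dots,Y_n)=\sum_{i=1}^n\sum_{k=0}^{m} c_{i,k}\,\partial^k Y_i$ with coefficients $c_{i,k}\in\mathcal{K}$ and an element $f\in\mathcal{F}$ such that $L(a_1,\dots,a_n)=\sigma(f)-f$.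
   Context: Setting 1: $\mathcal{M}=\mathcal{M}er(\mathbb{C})$ is the field of meromorphic functions on $\mathbb{C}$, $\sigma=\tau:f(x)\mapsto f(x+1)$, $\partial=d/dx$; $\mathcal{P}$ is the field of $1$-periodic meromorphic functions on $\mathbb{C}$, and $\mathcal{F}\subset\mathcal{M}$ is a subfield containing $\mathcal{P}(x)$, stable under $\tau,\tau^{-1},\partial$; then $\mathcal{K}=\mathcal{P}$. Setting 2: fix $q\in\mathbb{C}$ with $|q|\neq1$; $\mathcal{M}=\mathcal{M}er(\mathbb{C}^* )$, $\sigma=\sigma_q:f(x)\mapsto f(qx)$, $\partial=x\,d/dx$; $\mathcal{E}_q$ is the field of $\sigma_q$-invariant meromorphic functions on $\mathbb{C}^*$, and $\mathcal{F}\subset\mathcal{M}$ is a subfield containing $\mathcal{E}_q(x)$, stable under $\sigma_q,\sigma_q^{-1},\partial$; then $\mathcal{K}=\mathcal{E}_q$. *)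

theory Defs
  imports "HOL-Analysis.Analysis"
begin

text \<open>Meromorphic functions on an open set S (values at the poles are irrelevant):
  near every point z of S, f is g(w)/(w-z)^n with g holomorphic.\<close>
definition mero_on :: "complex set \<Rightarrow> (complex \<Rightarrow> complex) \<Rightarrow> bool" where
  "mero_on S f \<longleftrightarrow> (\<forall>z\<in>S. \<exists>r>0. ball z r \<subseteq> S \<and>
     (\<exists>(n::nat) g. g holomorphic_on ball z r \<and>
        (\<forall>w\<in>ball z r - {z}. f w = g w / (w - z) ^ n)))"

text \<open>Equality as meromorphic functions on S: agreement on a punctured neighbourhood of
  every point of S (i.e. outside a discrete closed subset of S).\<close>
definition meq :: "complex set \<Rightarrow> (complex \<Rightarrow> complex) \<Rightarrow> (complex \<Rightarrow> complex) \<Rightarrow> bool" where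
  "meq S f g \<longleftrightarrow> (\<forall>z\<in>S. eventually (\<lambda>w. f w = g w) (at z))"

text \<open>A subfield of the field of meromorphic functions on S, represented as the union of
  its equivalence classes (saturated w.r.t. meq).\<close>
definition mero_subfield :: "complex set \<Rightarrow> (complex \<Rightarrow> complex) set \<Rightarrow> bool" where
  "mero_subfield S F \<longleftrightarrow>
     F \<subseteq> {f. mero_on S f} \<and>
     (\<forall>f\<in>F. \<forall>g. mero_on S g \<and> meq S g f \<longrightarrow> g \<in> F) \<and>
     (\<lambda>_. 0) \<in> F \<and> (\<lambda>_. 1) \<in> F \<and>
     (\<forall>f\<in>F. \<forall>g\<in>F. (\<lambda>w. f w + g w) \<in> F \<and> (\<lambda>w. f w * g w) \<in> F) \<and>
     (\<forall>f\<in>F. (\<lambda>w. - f w) \<in> F) \<and>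
     (\<forall>f\<in>F. \<not> meq S f (\<lambda>_. 0) \<longrightarrow> (\<lambda>w. inverse (f w)) \<in> F)"

definition tau :: "(complex \<Rightarrow> complex) \<Rightarrow> complex \<Rightarrow> complex" where
  "tau f = (\<lambda>w. f (w + 1))"

definition tau_inv :: "(complex \<Rightarrow> complex) \<Rightarrow> complex \<Rightarrow> complex" where
  "tau_inv f = (\<lambda>w. f (w - 1))"

definition D1 :: "(complex \<Rightarrow> complex) \<Rightarrow> complex \<Rightarrow> complex" where
  "D1 f = deriv f"

definition setting1 :: "(complex \<Rightarrow> complex) set \<Rightarrow> bool" where
  "setting1 F \<longleftrightarrow> mero_subfield UNIV F \<and>
     (\<lambda>x. x) \<in> F \<and>
     (\<forall>p. mero_on UNIV p \<and> meq UNIV (tau p) p \<longrightarrow> p \<in> F) \<and>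
     (\<forall>f\<in>F. tau f \<in> F \<and> tau_inv f \<in> F \<and> D1 f \<in> F)"

definition sigq :: "complex \<Rightarrow> (complex \<Rightarrow> complex) \<Rightarrow> complex \<Rightarrow> complex" where
  "sigq q f = (\<lambda>w. f (q * w))"

definition sigq_inv :: "complex \<Rightarrow> (complex \<Rightarrow> complex) \<Rightarrow> complex \<Rightarrow> complex" where
  "sigq_inv q f = (\<lambda>w. f (w / q))"

definition D2 :: "(complex \<Rightarrow> complex) \<Rightarrow> complex \<Rightarrow> complex" where
  "D2 f = (\<lambda>w. w * deriv f w)"

definition setting2 :: "complex \<Rightarrow> (complex \<Rightarrow> complex) set \<Rightarrow> bool" where
  "setting2 q F \<longleftrightarrow> mero_subfield (- {0}) F \<and>
     (\<lambda>x. x) \<in> F \<and>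
     (\<forall>e. mero_on (- {0}) e \<and> meq (- {0}) (sigq q e) e \<longrightarrow> e \<in> F) \<and>
     (\<forall>f\<in>F. sigq q f \<in> F \<and> sigq_inv q f \<in> F \<and> D2 f \<in> F)"

text \<open>The family (D^k z_i), i<n, k>=0, is algebraically dependent over F: some nonzero
  polynomial (finitely many monomials alpha in the variables Y_(i,k), with coefficients in F)
  vanishes on it.\<close>
definition diff_alg_dependent ::
  "complex set \<Rightarrow> ((complex \<Rightarrow> complex) \<Rightarrow> complex \<Rightarrow> complex) \<Rightarrow> (complex \<Rightarrow> complex) set
   \<Rightarrow> nat \<Rightarrow> (nat \<Rightarrow> complex \<Rightarrow> complex) \<Rightarrow> bool" where
  "diff_alg_dependent S D F n z \<longleftrightarrow>
     (\<exists>(M :: (nat \<times> nat \<Rightarrow> nat) set) (m::nat) c.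
        finite M \<and> M \<subseteq> {\<alpha>. \<forall>i k. \<alpha> (i, k) \<noteq> 0 \<longrightarrow> i < n \<and> k \<le> m} \<and>
        (\<forall>\<alpha>\<in>M. c \<alpha> \<in> F) \<and> (\<exists>\<alpha>\<in>M. \<not> meq S (c \<alpha>) (\<lambda>_. 0)) \<and>
        meq S (\<lambda>w. \<Sum>\<alpha>\<in>M. c \<alpha> w *
                    (\<Prod>(i, k)\<in>{..<n} \<times> {..m}. ((D ^^ k) (z i) w) ^ \<alpha> (i, k)))
              (\<lambda>_. 0))"

definition telescoper_exists ::
  "complex set \<Rightarrow> ((complex \<Rightarrow> complex) \<Rightarrow> complex \<Rightarrow> complex)
   \<Rightarrow> ((complex \<Rightarrow> complex) \<Rightarrow> complex \<Rightarrow> complex) \<Rightarrow> (complex \<Rightarrow> complex) set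
   \<Rightarrow> nat \<Rightarrow> (nat \<Rightarrow> complex \<Rightarrow> complex) \<Rightarrow> bool" where
  "telescoper_exists S \<sigma> D F n a \<longleftrightarrow>
     (\<exists>(m::nat) (c :: nat \<Rightarrow> nat \<Rightarrow> complex \<Rightarrow> complex) f.
        (\<forall>i<n. \<forall>k\<le>m. c i k \<in> F \<and> meq S (\<sigma> (c i k)) (c i k)) \<and>
        (\<exists>i<n. \<exists>k\<le>m. \<not> meq S (c i k) (\<lambda>_. 0)) \<and>
        f \<in> F \<and>
        meq S (\<lambda>w. \<Sum>i<n. \<Sum>k\<le>m. c i k w * (D ^^ k) (a i) w)
              (\<lambda>w. \<sigma> f w - f w))"

end

theory Submission
  imports Defs "HOL-Library.Poly_Mapping" "HOL-Computational_Algebra.Polynomial"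
    "HOL-Complex_Analysis.Complex_Analysis"
begin

(*
  Write W(i,k) for the k-th derivative of
  z_i and B(i,k) for that of a_i; since sigma commutes with the derivation, sigma(W) = W + B.
  The Kolchin--Ostrowski theorem for difference fields says that such W are algebraically
  dependent over F iff a nontrivial combination of them with sigma-constant coefficients lies
  in F, and applying sigma to that combination shows this is exactly a telescoper
  L(a_1, ..., a_n) = sigma(f) - f.
*)

section \<open>Polynomials in finitely many variables\<close>

type_synonym ('v, 'a) mpoly = "('v \<Rightarrow>\<^sub>0 nat) \<Rightarrow>\<^sub>0 'a"

abbreviation lookup where "lookup \<equiv> Poly_Mapping.lookup"
abbreviation keys where "keys \<equiv> Poly_Mapping.keys"
abbreviation single where "single \<equiv> Poly_Mapping.single"

definition monom_val :: "('v \<Rightarrow>\<^sub>0 nat) \<Rightarrow> ('v \<Rightarrow> 'a::comm_ring_1) \<Rightarrow> 'a" where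
  "monom_val \<alpha> x = (\<Prod>v\<in>keys \<alpha>. x v ^ lookup \<alpha> v)"

definition peval :: "('v, 'a) mpoly \<Rightarrow> ('v \<Rightarrow> 'a::comm_ring_1) \<Rightarrow> 'a" where
  "peval P x = (\<Sum>\<alpha>\<in>keys P. lookup P \<alpha> * monom_val \<alpha> x)"

definition PVar :: "'v \<Rightarrow> ('v, 'a::comm_ring_1) mpoly" where
  "PVar v = single (single v 1) 1"

definition PConst :: "'a \<Rightarrow> ('v, 'a::comm_ring_1) mpoly" where
  "PConst c = single 0 c"

lemma monom_val_superset:
  assumes "finite A" "keys \<alpha> \<subseteq> A"
  shows "monom_val \<alpha> x = (\<Prod>v\<in>A. x v ^ lookup \<alpha> v)"
  unfolding monom_val_def
  by (rule prod.mono_neutral_left) (use assms in \<open>auto simp: in_keys_iff\<close>)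

lemma keys_add_monomial: "keys (\<alpha> + \<beta> :: 'v \<Rightarrow>\<^sub>0 nat) = keys \<alpha> \<union> keys \<beta>"
  by (auto simp: in_keys_iff lookup_add)

lemma monom_val_add: "monom_val (\<alpha> + \<beta>) x = monom_val \<alpha> x * monom_val \<beta> x"
proof -
  let ?A = "keys \<alpha> \<union> keys \<beta>"
  have "monom_val (\<alpha> + \<beta>) x = (\<Prod>v\<in>?A. x v ^ lookup (\<alpha> + \<beta>) v)"
    by (rule monom_val_superset) (auto simp: keys_add_monomial)
  also have "\<dots> = (\<Prod>v\<in>?A. x v ^ lookup \<alpha> v) * (\<Prod>v\<in>?A. x v ^ lookup \<beta> v)"
    by (simp add: lookup_add power_add prod.distrib)
  finally show ?thesis
    by (simp add: monom_val_superset[symmetric])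
qed

lemma monom_val_zero [simp]: "monom_val 0 x = 1"
  by (simp add: monom_val_def)

lemma monom_val_single: "monom_val (single j k) x = x j ^ k"
  by (simp add: monom_val_def lookup_single)

lemma peval_superset:
  assumes "finite A" "keys P \<subseteq> A"
  shows "peval P x = (\<Sum>\<alpha>\<in>A. lookup P \<alpha> * monom_val \<alpha> x)"
  unfolding peval_def
  by (rule sum.mono_neutral_left) (use assms in \<open>auto simp: in_keys_iff\<close>)

lemma peval_add: "peval (P + Q) x = peval P x + peval Q x"
proof -
  let ?A = "keys P \<union> keys Q"
  have "peval (P + Q) x = (\<Sum>\<alpha>\<in>?A. lookup (P + Q) \<alpha> * monom_val \<alpha> x)"
    by (rule peval_superset) (auto simp: keys_add)
  also have "\<dots> = (\<Sum>\<alpha>\<in>?A. lookup P \<alpha> * monom_val \<alpha> x) + (\<Sum>\<alpha>\<in>?A. lookup Q \<alpha> * monom_val \<alpha> x)"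
    by (simp add: lookup_add distrib_right sum.distrib)
  finally show ?thesis
    by (simp add: peval_superset[symmetric])
qed

lemma peval_zero [simp]: "peval 0 x = 0"
  by (simp add: peval_def)

lemma peval_diff: "peval (P - Q) x = peval P x - peval Q x"
  using peval_add[of "P - Q" Q x] by (simp add: algebra_simps)

lemma peval_sum: "peval (\<Sum>i\<in>I. P i) x = (\<Sum>i\<in>I. peval (P i) x)"
  by (induction I rule: infinite_finite_induct) (auto simp: peval_add)

lemma peval_single [simp]: "peval (single \<alpha> c) x = c * monom_val \<alpha> x"
  by (subst peval_superset[of "{\<alpha>}"]) (auto simp: lookup_single)

lemma mpoly_expand: "P = (\<Sum>\<alpha>\<in>keys P. single \<alpha> (lookup P \<alpha>))"
  by (rule poly_mapping_eqI)
     (auto simp: lookup_sum lookup_single when_def in_keys_iff sum.delta' split: if_splits)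

lemma peval_mult: "peval (P * Q) x = peval P x * peval Q x"
proof -
  have "P * Q = (\<Sum>\<alpha>\<in>keys P. \<Sum>\<beta>\<in>keys Q. single \<alpha> (lookup P \<alpha>) * single \<beta> (lookup Q \<beta>))"
    by (subst mpoly_expand[of P], subst mpoly_expand[of Q])
       (simp add: sum_distrib_left sum_distrib_right sum.swap[of _ "keys Q"])
  hence "peval (P * Q) x =
      (\<Sum>\<alpha>\<in>keys P. \<Sum>\<beta>\<in>keys Q. lookup P \<alpha> * monom_val \<alpha> x * (lookup Q \<beta> * monom_val \<beta> x))"
    by (simp add: peval_sum mult_single monom_val_add mult_ac)
  also have "\<dots> = peval P x * peval Q x"
    by (simp add: peval_def sum_distrib_left sum_distrib_right sum.swap[of _ "keys Q"])
  finally show ?thesis .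
qed

lemma peval_one [simp]: "peval 1 x = 1"
  using peval_single[of 0 1 x] by simp

lemma peval_power: "peval (P ^ n) x = peval P x ^ n"
  by (induction n) (auto simp: peval_mult)

lemma peval_prod: "peval (\<Prod>i\<in>I. P i) x = (\<Prod>i\<in>I. peval (P i) x)"
  by (induction I rule: infinite_finite_induct) (auto simp: peval_mult)

lemma peval_PVar [simp]: "peval (PVar v) x = x v"
  by (simp add: PVar_def monom_val_def)

lemma peval_PConst [simp]: "peval (PConst c) x = c"
  by (simp add: PConst_def)

lemma PConst_0 [simp]: "PConst 0 = 0"
  by (simp add: PConst_def)

lemma PConst_mult_single: "PConst a * single \<alpha> b = single \<alpha> (a * b)"
  by (simp add: PConst_def mult_single)

lemma lookup_PConst_mult: "lookup (PConst a * P) \<beta> = a * lookup P \<beta>"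
proof -
  have "PConst a * P = (\<Sum>\<alpha>\<in>keys P. single \<alpha> (a * lookup P \<alpha>))"
    by (subst mpoly_expand[of P]) (simp add: sum_distrib_left PConst_mult_single)
  thus ?thesis
    by (auto simp: lookup_sum lookup_single when_def in_keys_iff sum.delta)
qed

lemma keys_PConst_mult:
  "a \<noteq> 0 \<Longrightarrow> keys (PConst a * P) = keys (P :: ('v, 'a::field) mpoly)"
  by (auto simp: in_keys_iff lookup_PConst_mult)

lemma monom_val_origin: "monom_val \<alpha> (\<lambda>_. 0 :: 'a::comm_ring_1) = (if \<alpha> = 0 then 1 else 0)"
proof (cases "\<alpha> = 0")
  case False
  then obtain v where "v \<in> keys \<alpha>" by (metis keys_eq_empty ex_in_conv)
  thus ?thesis using False unfolding monom_val_def
    by (subst prod_zero) (auto simp: in_keys_iff zero_power intro!: bexI[of _ v])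
qed simp

lemma peval_origin: "peval P (\<lambda>_. 0 :: 'a::comm_ring_1) = lookup P 0"
  by (subst peval_superset[of "insert 0 (keys P)"])
     (auto simp: monom_val_origin if_distrib sum.delta cong: if_cong)

definition vars_in :: "'v set \<Rightarrow> ('v, 'a::comm_ring_1) mpoly \<Rightarrow> bool" where
  "vars_in V P \<longleftrightarrow> (\<forall>\<alpha>\<in>keys P. keys \<alpha> \<subseteq> V)"

definition coeffs_in :: "'a set \<Rightarrow> ('v, 'a::comm_ring_1) mpoly \<Rightarrow> bool" where
  "coeffs_in F P \<longleftrightarrow> (\<forall>\<alpha>. lookup P \<alpha> \<in> F)"

lemma keys_uminus: "keys (- P) = keys P"
  by (auto simp: in_keys_iff)

lemma vars_in_add: "vars_in V P \<Longrightarrow> vars_in V Q \<Longrightarrow> vars_in V (P + Q)"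
  using keys_add[of P Q] by (auto simp: vars_in_def)

lemma vars_in_diff: "vars_in V P \<Longrightarrow> vars_in V Q \<Longrightarrow> vars_in V (P - Q)"
  using vars_in_add[of V P "- Q"] by (simp add: vars_in_def keys_uminus)

lemma vars_in_mult: "vars_in V P \<Longrightarrow> vars_in V Q \<Longrightarrow> vars_in V (P * Q)"
  using keys_mult[of P Q] by (fastforce simp: vars_in_def keys_add_monomial)

lemma vars_in_sum: "(\<And>i. i \<in> I \<Longrightarrow> vars_in V (P i)) \<Longrightarrow> vars_in V (\<Sum>i\<in>I. P i)"
proof (induction I rule: infinite_finite_induct)
  case (insert i I) thus ?case by (auto intro!: vars_in_add)
qed (auto simp: vars_in_def)

lemma vars_in_one: "vars_in V 1"
  by (simp add: vars_in_def)

lemma vars_in_prod: "(\<And>i. i \<in> I \<Longrightarrow> vars_in V (P i)) \<Longrightarrow> vars_in V (\<Prod>i\<in>I. P i)"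
  by (induction I rule: infinite_finite_induct) (auto intro: vars_in_mult vars_in_one)

lemma vars_in_power: "vars_in V P \<Longrightarrow> vars_in V (P ^ n)"
  by (induction n) (auto intro: vars_in_mult vars_in_one)

lemma vars_in_PConst: "vars_in V (PConst c)"
  by (simp add: vars_in_def PConst_def)

lemma vars_in_PVar: "v \<in> V \<Longrightarrow> vars_in V (PVar v)"
  by (simp add: vars_in_def PVar_def)

lemma peval_cong_vars:
  assumes "vars_in V P" "\<And>v. v \<in> V \<Longrightarrow> x v = y v"
  shows "peval P x = peval P y"
  unfolding peval_def monom_val_def
proof (intro sum.cong refl arg_cong2[where f = "(*)"] prod.cong)
  fix \<alpha> v assume "\<alpha> \<in> keys P" "v \<in> keys \<alpha>"
  hence "v \<in> V" using assms(1) by (auto simp: vars_in_def)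
  thus "x v ^ lookup \<alpha> v = y v ^ lookup \<alpha> v" using assms(2) by simp
qed

definition mdeg :: "('v \<Rightarrow>\<^sub>0 nat) \<Rightarrow> nat" where
  "mdeg \<alpha> = (\<Sum>v\<in>keys \<alpha>. lookup \<alpha> v)"

lemma mdeg_add: "mdeg (\<alpha> + \<beta>) = mdeg \<alpha> + mdeg \<beta>"
proof -
  have eq: "mdeg \<gamma> = (\<Sum>v\<in>keys \<alpha> \<union> keys \<beta>. lookup \<gamma> v)" if "keys \<gamma> \<subseteq> keys \<alpha> \<union> keys \<beta>" for \<gamma>
    unfolding mdeg_def by (rule sum.mono_neutral_left) (use that in \<open>auto simp: in_keys_iff\<close>)
  show ?thesis
    by (subst (1 2 3) eq) (auto simp: keys_add_monomial lookup_add sum.distrib)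
qed

lemma mdeg_zero [simp]: "mdeg 0 = 0"
  by (simp add: mdeg_def)

lemma mdeg_single [simp]: "mdeg (single v k) = k"
  by (simp add: mdeg_def lookup_single)

lemma mdeg_eq_0_iff: "mdeg \<alpha> = 0 \<longleftrightarrow> \<alpha> = 0"
proof
  assume "mdeg \<alpha> = 0"
  hence "\<forall>v\<in>keys \<alpha>. lookup \<alpha> v = 0" by (simp add: mdeg_def)
  thus "\<alpha> = 0" by (auto simp: in_keys_iff intro: poly_mapping_eqI)
qed (simp add: mdeg_def)

definition deg_le :: "nat \<Rightarrow> ('v, 'a::comm_ring_1) mpoly \<Rightarrow> bool" where
  "deg_le d P \<longleftrightarrow> (\<forall>\<alpha>\<in>keys P. mdeg \<alpha> \<le> d)"

definition deg_lt :: "nat \<Rightarrow> ('v, 'a::comm_ring_1) mpoly \<Rightarrow> bool" where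
  "deg_lt d P \<longleftrightarrow> (\<forall>\<alpha>\<in>keys P. mdeg \<alpha> < d)"

lemma deg_le_add: "deg_le d P \<Longrightarrow> deg_le d Q \<Longrightarrow> deg_le d (P + Q)"
  and deg_lt_add: "deg_lt d P \<Longrightarrow> deg_lt d Q \<Longrightarrow> deg_lt d (P + Q)"
  using keys_add[of P Q] by (auto simp: deg_le_def deg_lt_def)

lemma deg_le_diff: "deg_le d P \<Longrightarrow> deg_le d Q \<Longrightarrow> deg_le d (P - Q)"
  and deg_lt_diff: "deg_lt d P \<Longrightarrow> deg_lt d Q \<Longrightarrow> deg_lt d (P - Q)"
  using deg_le_add[of d P "- Q"] deg_lt_add[of d P "- Q"]
  by (auto simp: deg_le_def deg_lt_def keys_uminus)

lemma deg_le_zero [simp]: "deg_le d 0"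
  and deg_lt_zero [simp]: "deg_lt d 0"
  and deg_le_one [simp]: "deg_le d 1"
  by (auto simp: deg_le_def deg_lt_def)

lemma deg_le_sum: "(\<And>i. i \<in> I \<Longrightarrow> deg_le d (P i)) \<Longrightarrow> deg_le d (\<Sum>i\<in>I. P i)"
  by (induction I rule: infinite_finite_induct) (auto intro: deg_le_add)

lemma deg_lt_sum: "(\<And>i. i \<in> I \<Longrightarrow> deg_lt d (P i)) \<Longrightarrow> deg_lt d (\<Sum>i\<in>I. P i)"
  by (induction I rule: infinite_finite_induct) (auto intro: deg_lt_add)

lemma deg_le_mult: "deg_le a P \<Longrightarrow> deg_le b Q \<Longrightarrow> deg_le (a + b) (P * Q)"
  using keys_mult[of P Q] by (fastforce simp: deg_le_def mdeg_add intro: add_mono)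

lemma deg_lt_mult: "deg_lt a P \<Longrightarrow> deg_le b Q \<Longrightarrow> deg_lt (a + b) (P * Q)"
  using keys_mult[of P Q]
  by (fastforce simp: deg_le_def deg_lt_def mdeg_add intro: add_less_le_mono)

lemma deg_lt_mult': "deg_le a P \<Longrightarrow> deg_lt b Q \<Longrightarrow> deg_lt (a + b) (P * Q)"
  using deg_lt_mult[of b Q a P] by (simp add: mult.commute add.commute)

lemma deg_le_mono: "deg_le a P \<Longrightarrow> a \<le> b \<Longrightarrow> deg_le b P"
  and deg_lt_mono: "deg_lt a P \<Longrightarrow> a \<le> b \<Longrightarrow> deg_lt b P"
  by (auto simp: deg_le_def deg_lt_def)

lemma deg_le_PConst [simp]: "deg_le 0 (PConst c)"
  and deg_lt_PConst [simp]: "deg_lt (Suc 0) (PConst c)"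
  and deg_le_PVar [simp]: "deg_le (Suc 0) (PVar v)"
  by (simp_all add: deg_le_def deg_lt_def PConst_def PVar_def)

lemma deg_le_prod:
  "(\<And>i. i \<in> A \<Longrightarrow> deg_le (k i) (p i)) \<Longrightarrow> deg_le (\<Sum>i\<in>A. k i) (\<Prod>i\<in>A. p i)"
  by (induction A rule: infinite_finite_induct) (auto simp: deg_le_mult)

lemma deg_lt_prod_diff:
  assumes "finite A"
    and "\<And>i. i \<in> A \<Longrightarrow> deg_le (k i) (p i)" "\<And>i. i \<in> A \<Longrightarrow> deg_le (k i) (q i)"
    and "\<And>i. i \<in> A \<Longrightarrow> deg_lt (k i) (p i - q i)"
  shows "deg_lt (\<Sum>i\<in>A. k i) ((\<Prod>i\<in>A. p i) - (\<Prod>i\<in>A. q i))"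
  using assms
proof (induction A rule: finite_induct)
  case (insert a A)
  have eq: "p a * prod p A - q a * prod q A =
      (p a - q a) * prod p A + q a * (prod p A - prod q A)"
    by (simp add: algebra_simps)
  have "deg_lt (k a + sum k A) ((p a - q a) * prod p A)"
    by (rule deg_lt_mult) (use insert in \<open>auto intro: deg_le_prod\<close>)
  moreover have "deg_lt (k a + sum k A) (q a * (prod p A - prod q A))"
    by (rule deg_lt_mult') (use insert in auto)
  ultimately show ?case
    using insert by (simp add: eq deg_lt_add)
qed simp

lemma deg_le_0_imp_const:
  assumes "deg_le 0 P"
  shows "P = PConst (lookup P 0)"
proof -
  have "keys P \<subseteq> {0}" using assms by (auto simp: deg_le_def mdeg_eq_0_iff)
  hence "P = (\<Sum>\<alpha>\<in>{0}. single \<alpha> (lookup P \<alpha>))"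
    by (subst mpoly_expand, intro sum.mono_neutral_left) (auto simp: in_keys_iff)
  thus ?thesis by (simp add: PConst_def)
qed

definition shift_poly :: "('a \<Rightarrow> 'a) \<Rightarrow> ('v \<Rightarrow> 'a) \<Rightarrow> ('v, 'a::comm_ring_1) mpoly \<Rightarrow> ('v, 'a) mpoly"
  where "shift_poly \<tau> c P =
    (\<Sum>\<alpha>\<in>keys P. PConst (\<tau> (lookup P \<alpha>)) * (\<Prod>v\<in>keys \<alpha>. (PVar v + PConst (c v)) ^ lookup \<alpha> v))"

lemma peval_shift_poly:
  "peval (shift_poly \<tau> c P) x = (\<Sum>\<alpha>\<in>keys P. \<tau> (lookup P \<alpha>) * monom_val \<alpha> (\<lambda>v. x v + c v))"
  by (simp add: shift_poly_def peval_sum peval_mult peval_prod peval_power peval_add monom_val_def)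

lemma peval_shift_poly_id: "peval (shift_poly id c P) x = peval P (\<lambda>v. x v + c v)"
  unfolding peval_shift_poly by (simp add: peval_def)

lemma vars_in_shift_poly: "vars_in V P \<Longrightarrow> vars_in V (shift_poly \<tau> c P)"
  unfolding shift_poly_def
  by (intro vars_in_sum vars_in_mult vars_in_PConst vars_in_prod vars_in_power vars_in_add
      vars_in_PVar) (auto simp: vars_in_def)

lemma PVar_power: "PVar v ^ k = single (single v k) 1"
  by (induction k) (auto simp: PVar_def mult_single single_add[symmetric])

lemma lookup_shift_poly_no_translation:
  assumes "\<tau> 0 = 0"
  shows "lookup (shift_poly \<tau> (\<lambda>_. 0) P) \<beta> = \<tau> (lookup P \<beta>)"
proof -
  have prod_single: "(\<Prod>v\<in>A. single (f v) (1::'a)) = single (\<Sum>v\<in>A. f v) 1" for A and f :: "'v \<Rightarrow> 'v \<Rightarrow>\<^sub>0 nat"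
    by (induction A rule: infinite_finite_induct) (auto simp: mult_single)
  have "shift_poly \<tau> (\<lambda>_. 0) P = (\<Sum>\<alpha>\<in>keys P. single \<alpha> (\<tau> (lookup P \<alpha>)))"
    by (simp add: shift_poly_def PVar_power prod_single PConst_mult_single flip: mpoly_expand)
  thus ?thesis
    using assms by (auto simp: lookup_sum lookup_single when_def in_keys_iff sum.delta)
qed

lemma shift_poly_id_no_translation: "shift_poly id (\<lambda>_. 0) P = P"
  by (rule poly_mapping_eqI) (simp add: lookup_shift_poly_no_translation)

lemma deg_le_shift_poly:
  assumes "deg_le d P"
  shows "deg_le d (shift_poly \<tau> c P)"
  unfolding shift_poly_def
proof (rule deg_le_sum)
  fix \<alpha> assume \<alpha>: "\<alpha> \<in> keys P"
  have power: "deg_le k ((PVar v + PConst a) ^ k)" for k v a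
    using deg_le_prod[of "{..<k}" "\<lambda>_. 1" "\<lambda>_. PVar v + PConst a"]
    by (simp add: deg_le_add deg_le_mono[OF deg_le_PConst])
  have "deg_le (0 + mdeg \<alpha>) (PConst (\<tau> (lookup P \<alpha>)) * (\<Prod>v\<in>keys \<alpha>. (PVar v + PConst (c v)) ^ lookup \<alpha> v))"
    unfolding mdeg_def by (intro deg_le_mult deg_le_prod power) auto
  moreover have "0 + mdeg \<alpha> \<le> d" using assms \<alpha> by (auto simp: deg_le_def)
  ultimately show "deg_le d (PConst (\<tau> (lookup P \<alpha>)) * (\<Prod>v\<in>keys \<alpha>. (PVar v + PConst (c v)) ^ lookup \<alpha> v))"
    by (rule deg_le_mono)
qed

lemma deg_lt_translation:
  assumes "deg_le d P"
  shows "deg_lt d (shift_poly \<tau> c P - shift_poly \<tau> (\<lambda>_. 0) P)"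
proof -
  let ?m = "\<lambda>c \<alpha>. \<Prod>v\<in>keys \<alpha>. (PVar v + PConst (c v)) ^ lookup \<alpha> v"
  have power_le: "deg_le k ((PVar v + PConst a) ^ k)" for k v a
    using deg_le_prod[of "{..<k}" "\<lambda>_. 1" "\<lambda>_. PVar v + PConst a"]
    by (simp add: deg_le_add deg_le_mono[OF deg_le_PConst])
  have power_lt: "deg_lt k ((PVar v + PConst a) ^ k - PVar v ^ k)" for k v a
    using deg_lt_prod_diff[of "{..<k}" "\<lambda>_. 1" "\<lambda>_. PVar v + PConst a" "\<lambda>_. PVar v"]
    by (simp add: deg_le_add deg_le_mono[OF deg_le_PConst])
  have power_le_var: "deg_le k (PVar v ^ k)" for k v
    using power_le[of k v 0] by simp
  have "shift_poly \<tau> c P - shift_poly \<tau> (\<lambda>_. 0) P =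
      (\<Sum>\<alpha>\<in>keys P. PConst (\<tau> (lookup P \<alpha>)) * (?m c \<alpha> - ?m (\<lambda>_. 0) \<alpha>))"
    by (simp add: shift_poly_def sum_subtractf right_diff_distrib)
  also have "deg_lt d \<dots>"
  proof (rule deg_lt_sum)
    fix \<alpha> assume \<alpha>: "\<alpha> \<in> keys P"
    have "deg_lt (mdeg \<alpha>) (?m c \<alpha> - ?m (\<lambda>_. 0) \<alpha>)"
      unfolding mdeg_def by (rule deg_lt_prod_diff) (auto intro: power_le power_le_var power_lt)
    hence "deg_lt (0 + mdeg \<alpha>) (PConst (\<tau> (lookup P \<alpha>)) * (?m c \<alpha> - ?m (\<lambda>_. 0) \<alpha>))"
      by (intro deg_lt_mult') auto
    moreover have "0 + mdeg \<alpha> \<le> d" using assms \<alpha> by (auto simp: deg_le_def)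
    ultimately show "deg_lt d (PConst (\<tau> (lookup P \<alpha>)) * (?m c \<alpha> - ?m (\<lambda>_. 0) \<alpha>))"
      by (rule deg_lt_mono)
  qed
  finally show ?thesis .
qed

text \<open>In characteristic zero, a polynomial vanishing at all points with natural-number
  coordinates is zero; this is proved by induction on the set of variables, viewing the
  polynomial as a univariate polynomial in the last variable.\<close>

lemma mpoly_zero_on_nat_grid:
  fixes P :: "('v, 'a::{idom, ring_char_0}) mpoly"
  assumes "finite V" "vars_in V P"
    and "\<And>x. (\<forall>v. x v \<in> range of_nat) \<Longrightarrow> peval P x = 0"
  shows "P = 0"
  using assms(1,2,3)
proof (induction V arbitrary: P rule: finite_induct)
  case empty
  hence "deg_le 0 P" by (auto simp: vars_in_def deg_le_def mdeg_def)
  hence P: "P = PConst (lookup P 0)" by (rule deg_le_0_imp_const)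
  have "peval P (\<lambda>_. 0) = 0" by (rule empty.prems) (auto intro: range_eqI[of _ _ 0])
  with P show ?case by (metis peval_PConst PConst_0)
next
  case (insert j A)
  define K where "K = (\<lambda>\<alpha>. lookup \<alpha> j) ` keys P"
  \<comment> \<open>\<open>Pk k\<close> is the coefficient of \<open>PVar j ^ k\<close>, a polynomial in the variables \<open>A\<close>\<close>
  define Pk where "Pk k = (\<Sum>\<alpha>\<in>{\<alpha>\<in>keys P. lookup \<alpha> j = k}. single (\<alpha> - single j k) (lookup P \<alpha>))" for k
  have split: "P = (\<Sum>k\<in>K. Pk k * single (single j k) 1)"
  proof -
    have minus_add: "(\<alpha> - single j (lookup \<alpha> j)) + single j (lookup \<alpha> j) = \<alpha>" for \<alpha> :: "'v \<Rightarrow>\<^sub>0 nat"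
      by (rule poly_mapping_eqI) (auto simp: lookup_add lookup_minus lookup_single when_def)
    have "P = (\<Sum>k\<in>K. \<Sum>\<alpha>\<in>{\<alpha>\<in>keys P. lookup \<alpha> j = k}. single \<alpha> (lookup P \<alpha>))"
      unfolding K_def by (subst mpoly_expand, rule sum.image_gen) simp
    also have "\<dots> = (\<Sum>k\<in>K. Pk k * single (single j k) 1)"
      unfolding Pk_def sum_distrib_right
      by (intro sum.cong refl) (auto simp: mult_single minus_add)
    finally show ?thesis .
  qed
  have vars_Pk: "vars_in A (Pk k)" for k
    unfolding vars_in_def
  proof
    fix \<beta> assume "\<beta> \<in> keys (Pk k)"
    then obtain \<alpha> where \<alpha>: "\<alpha> \<in> keys P" "lookup \<alpha> j = k" "\<beta> = \<alpha> - single j k"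
      using keys_sum[of "\<lambda>\<alpha>. single (\<alpha> - single j k) (lookup P \<alpha>)" "{\<alpha>\<in>keys P. lookup \<alpha> j = k}"]
      unfolding Pk_def by (auto split: if_splits)
    have "keys (\<alpha> - single j k) \<subseteq> keys \<alpha> - {j}"
      using \<alpha>(2) by (auto simp: in_keys_iff lookup_minus lookup_single when_def split: if_splits)
    thus "keys \<beta> \<subseteq> A" using insert.prems(1) \<alpha> by (auto simp: vars_in_def)
  qed
  have "Pk k = 0" if "k \<in> K" for k
  proof (rule insert.IH[OF vars_Pk])
    fix x :: "'v \<Rightarrow> 'a" assume x: "\<forall>v. x v \<in> range of_nat"
    \<comment> \<open>freezing all variables but \<open>j\<close> gives a univariate polynomial with infinitely many roots\<close>
    define U where "U = (\<Sum>k\<in>K. monom (peval (Pk k) x) k)"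
    have "peval (Pk k) (x(j := t)) = peval (Pk k) x" for k t
      using vars_Pk insert.hyps(2) by (intro peval_cong_vars) auto
    hence "poly U t = peval P (x(j := t))" for t
      by (subst split) (simp add: U_def peval_sum peval_mult monom_val_single poly_sum poly_monom mult.commute)
    hence "range of_nat \<subseteq> {t. poly U t = 0}"
      using x by (auto intro!: insert.prems(2))
    moreover have "infinite (range (of_nat :: nat \<Rightarrow> 'a))"
      using finite_imageD[of "of_nat :: nat \<Rightarrow> 'a" UNIV] inj_of_nat by auto
    ultimately have "U = 0" using poly_roots_finite[of U] finite_subset by blast
    hence "coeff U k = 0" by simp
    thus "peval (Pk k) x = 0"
      using that by (simp add: U_def coeff_sum K_def)
  qed
  thus ?case by (subst split) simp
qed

lemma affine_if_constant_increments:
  fixes P :: "('v, 'a::{idom, ring_char_0}) mpoly"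
  assumes "finite V" "vars_in V P"
    and steps: "\<And>j x. j \<in> V \<Longrightarrow> peval P (\<lambda>v. x v + (if v = j then 1 else 0)) = peval P x + k j"
  shows "P = PConst (peval P (\<lambda>_. 0)) + (\<Sum>j\<in>V. PConst (k j) * PVar j)"
proof -
  let ?c0 = "peval P (\<lambda>_. 0)"
  have multi: "peval P (\<lambda>v. x v + (if v = j then of_nat n else 0)) = peval P x + of_nat n * k j"
    if "j \<in> V" for j x n
  proof (induction n)
    case (Suc n)
    have "peval P (\<lambda>v. x v + (if v = j then of_nat (Suc n) else 0)) =
        peval P (\<lambda>v. (x v + (if v = j then of_nat n else 0)) + (if v = j then 1 else 0))"
      by (rule arg_cong[where f = "peval P"]) (auto simp: fun_eq_iff)
    also have "\<dots> = peval P (\<lambda>v. x v + (if v = j then of_nat n else 0)) + k j"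
      by (rule steps[OF that])
    finally show ?case using Suc by (simp add: algebra_simps)
  qed (simp cong: if_cong)
  have grid: "peval P (\<lambda>v. if v \<in> A then of_nat (n v) else 0) = ?c0 + (\<Sum>j\<in>A. k j * of_nat (n j))"
    if "A \<subseteq> V" for A n
  proof -
    have "finite A" using that assms(1) finite_subset by blast
    thus ?thesis using that
    proof (induction A rule: finite_induct)
      case (insert j A)
      have "peval P (\<lambda>v. if v \<in> insert j A then of_nat (n v) else 0) =
          peval P (\<lambda>v. (if v \<in> A then of_nat (n v) else 0) + (if v = j then of_nat (n j) else 0))"
        by (rule arg_cong[where f = "peval P"]) (use insert.hyps(2) in \<open>auto simp: fun_eq_iff\<close>)
      also have "\<dots> = peval P (\<lambda>v. if v \<in> A then of_nat (n v) else 0) + of_nat (n j) * k j"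
        by (rule multi) (use insert.prems in auto)
      also have "\<dots> = ?c0 + (\<Sum>j\<in>A. k j * of_nat (n j)) + of_nat (n j) * k j"
        using insert.IH insert.prems by simp
      finally show ?case using insert.hyps by (simp add: algebra_simps)
    qed simp
  qed
  define R where "R = P - PConst ?c0 - (\<Sum>j\<in>V. PConst (k j) * PVar j)"
  have "R = 0"
  proof (rule mpoly_zero_on_nat_grid[OF assms(1)])
    show "vars_in V R" unfolding R_def
      by (intro vars_in_diff vars_in_sum vars_in_mult vars_in_PConst vars_in_PVar assms(2)) auto
    fix x :: "'v \<Rightarrow> 'a" assume "\<forall>v. x v \<in> range of_nat"
    hence "\<forall>v. \<exists>m. x v = of_nat m" by (auto simp: image_iff)
    then obtain n where n: "\<And>v. x v = of_nat (n v)" by metis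
    have "peval R x = peval R (\<lambda>v. if v \<in> V then of_nat (n v) else 0)"
      using \<open>vars_in V R\<close> n by (intro peval_cong_vars) auto
    also have "\<dots> = 0"
      using grid[of V n] by (simp add: R_def peval_diff peval_sum peval_mult mult.commute)
    finally show "peval R x = 0" .
  qed
  thus ?thesis by (simp add: R_def algebra_simps)
qed

section \<open>A Kolchin--Ostrowski theorem for difference fields\<close>

locale difference_field =
  fixes F :: "'a::field_char_0 set" and \<sigma> :: "'a \<Rightarrow> 'a"
  assumes F_0: "0 \<in> F" and F_1: "1 \<in> F"
    and F_add: "x \<in> F \<Longrightarrow> y \<in> F \<Longrightarrow> x + y \<in> F"
    and F_mult: "x \<in> F \<Longrightarrow> y \<in> F \<Longrightarrow> x * y \<in> F"
    and F_uminus: "x \<in> F \<Longrightarrow> - x \<in> F"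
    and F_inverse: "x \<in> F \<Longrightarrow> inverse x \<in> F"
    and \<sigma>_add: "\<sigma> (x + y) = \<sigma> x + \<sigma> y" and \<sigma>_mult: "\<sigma> (x * y) = \<sigma> x * \<sigma> y"
    and \<sigma>_one: "\<sigma> 1 = 1"
    and \<sigma>_F: "x \<in> F \<Longrightarrow> \<sigma> x \<in> F"
    and constants_in_F: "\<sigma> x = x \<Longrightarrow> x \<in> F"
begin

lemma \<sigma>_zero [simp]: "\<sigma> 0 = 0"
  using \<sigma>_add[of 0 0] by simp

lemma \<sigma>_uminus: "\<sigma> (- x) = - \<sigma> x"
  using \<sigma>_add[of x "- x"] by (simp add: eq_neg_iff_add_eq_0 add.commute)

lemma \<sigma>_diff: "\<sigma> (x - y) = \<sigma> x - \<sigma> y"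
  using \<sigma>_add[of x "- y"] by (simp add: \<sigma>_uminus)

lemma \<sigma>_sum: "\<sigma> (\<Sum>i\<in>I. f i) = (\<Sum>i\<in>I. \<sigma> (f i))"
  by (induction I rule: infinite_finite_induct) (auto simp: \<sigma>_add)

lemma \<sigma>_prod: "\<sigma> (\<Prod>i\<in>I. f i) = (\<Prod>i\<in>I. \<sigma> (f i))"
  by (induction I rule: infinite_finite_induct) (auto simp: \<sigma>_mult \<sigma>_one)

lemma \<sigma>_power: "\<sigma> (x ^ n) = \<sigma> x ^ n"
  by (induction n) (auto simp: \<sigma>_mult \<sigma>_one)

lemma F_diff: "x \<in> F \<Longrightarrow> y \<in> F \<Longrightarrow> x - y \<in> F"
  using F_add[of x "- y"] F_uminus[of y] by simp

lemma coeffs_in_add: "coeffs_in F P \<Longrightarrow> coeffs_in F Q \<Longrightarrow> coeffs_in F (P + Q)"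
  and coeffs_in_diff: "coeffs_in F P \<Longrightarrow> coeffs_in F Q \<Longrightarrow> coeffs_in F (P - Q)"
  by (auto simp: coeffs_in_def lookup_add lookup_minus intro: F_add F_diff)

lemma coeffs_in_single: "c \<in> F \<Longrightarrow> coeffs_in F (single \<alpha> c)"
  by (auto simp: coeffs_in_def lookup_single when_def F_0)

lemma coeffs_in_sum: "(\<And>i. i \<in> I \<Longrightarrow> coeffs_in F (P i)) \<Longrightarrow> coeffs_in F (\<Sum>i\<in>I. P i)"
proof (induction I rule: infinite_finite_induct)
  case (insert i I) thus ?case by (auto intro!: coeffs_in_add)
qed (auto simp: coeffs_in_def F_0)

lemma coeffs_in_mult:
  assumes "coeffs_in F P" "coeffs_in F Q"
  shows "coeffs_in F (P * Q)"
proof -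
  have "P * Q = (\<Sum>\<alpha>\<in>keys P. \<Sum>\<beta>\<in>keys Q. single (\<alpha> + \<beta>) (lookup P \<alpha> * lookup Q \<beta>))"
    by (subst mpoly_expand[of P], subst mpoly_expand[of Q])
       (simp add: sum_distrib_left sum_distrib_right sum.swap[of _ "keys Q"] mult_single)
  also have "coeffs_in F \<dots>"
    using assms by (intro coeffs_in_sum coeffs_in_single F_mult) (auto simp: coeffs_in_def)
  finally show ?thesis .
qed

lemma coeffs_in_one: "coeffs_in F 1"
  using coeffs_in_single[of 1 0] F_1 by simp

lemma coeffs_in_prod: "(\<And>i. i \<in> I \<Longrightarrow> coeffs_in F (P i)) \<Longrightarrow> coeffs_in F (\<Prod>i\<in>I. P i)"
  by (induction I rule: infinite_finite_induct) (auto intro: coeffs_in_mult coeffs_in_one)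

lemma coeffs_in_power: "coeffs_in F P \<Longrightarrow> coeffs_in F (P ^ n)"
  by (induction n) (auto intro: coeffs_in_mult coeffs_in_one)

lemma coeffs_in_PConst: "c \<in> F \<Longrightarrow> coeffs_in F (PConst c)"
  and coeffs_in_PVar: "coeffs_in F (PVar v)"
  by (simp_all add: PConst_def PVar_def coeffs_in_single F_1)

lemma coeffs_in_shift_poly:
  assumes "coeffs_in F P" "\<And>x. x \<in> F \<Longrightarrow> \<tau> x \<in> F" "vars_in V P" "\<And>v. v \<in> V \<Longrightarrow> c v \<in> F"
  shows "coeffs_in F (shift_poly \<tau> c P)"
  unfolding shift_poly_def
proof (intro coeffs_in_sum coeffs_in_mult coeffs_in_PConst coeffs_in_prod coeffs_in_power
    coeffs_in_add coeffs_in_PVar)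
  fix \<alpha> v assume "\<alpha> \<in> keys P" "v \<in> keys \<alpha>"
  thus "c v \<in> F" using assms(3,4) by (auto simp: vars_in_def)
next
  fix \<alpha> show "\<tau> (lookup P \<alpha>) \<in> F" using assms(1,2) by (auto simp: coeffs_in_def)
qed

end

locale ostrowski_setting = difference_field F \<sigma>
  for F :: "'a::field_char_0 set" and \<sigma> +
  fixes V :: "'v set" and w b :: "'v \<Rightarrow> 'a"
  assumes finite_V: "finite V" and b_F: "v \<in> V \<Longrightarrow> b v \<in> F"
    and \<sigma>_w: "v \<in> V \<Longrightarrow> \<sigma> (w v) = w v + b v"
begin

definition annihilator :: "('v, 'a) mpoly \<Rightarrow> bool" where
  "annihilator P \<longleftrightarrow> coeffs_in F P \<and> vars_in V P \<and> peval P w = 0"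

lemma \<sigma>_peval_solution:
  assumes "vars_in V P" "\<And>v. v \<in> V \<Longrightarrow> \<sigma> (y v) = y v + b v"
  shows "\<sigma> (peval P y) = peval (shift_poly \<sigma> b P) y"
proof -
  have "\<sigma> (peval P y) = (\<Sum>\<alpha>\<in>keys P. \<sigma> (lookup P \<alpha>) * monom_val \<alpha> (\<lambda>v. \<sigma> (y v)))"
    by (simp add: peval_def \<sigma>_sum \<sigma>_mult \<sigma>_prod \<sigma>_power monom_val_def)
  also have "\<dots> = (\<Sum>\<alpha>\<in>keys P. \<sigma> (lookup P \<alpha>) * monom_val \<alpha> (\<lambda>v. y v + b v))"
  proof (intro sum.cong refl arg_cong2[where f = "(*)"])
    fix \<alpha> assume "\<alpha> \<in> keys P"
    hence "keys \<alpha> \<subseteq> V" using assms(1) by (auto simp: vars_in_def)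
    thus "monom_val \<alpha> (\<lambda>v. \<sigma> (y v)) = monom_val \<alpha> (\<lambda>v. y v + b v)"
      unfolding monom_val_def using assms(2) by (intro prod.cong refl) auto
  qed
  finally show ?thesis by (simp add: peval_shift_poly)
qed

definition top_count :: "nat \<Rightarrow> ('v, 'a) mpoly \<Rightarrow> nat" where
  "top_count d P = card {\<alpha>\<in>keys P. mdeg \<alpha> = d}"

definition minimal_annihilator :: "nat \<Rightarrow> ('v \<Rightarrow>\<^sub>0 nat) \<Rightarrow> ('v, 'a) mpoly \<Rightarrow> bool" where
  "minimal_annihilator d \<mu> P \<longleftrightarrow>
     annihilator P \<and> deg_le d P \<and> mdeg \<mu> = d \<and> lookup P \<mu> = 1 \<and>
     (\<forall>Q. annihilator Q \<longrightarrow> deg_lt d Q \<longrightarrow> Q = 0) \<and>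
     (\<forall>Q. annihilator Q \<longrightarrow> Q \<noteq> 0 \<longrightarrow> deg_le d Q \<longrightarrow> top_count d P \<le> top_count d Q)"

lemma minimal_annihilator_exists:
  assumes "annihilator P0" "P0 \<noteq> 0"
  shows "\<exists>d \<mu> P. minimal_annihilator d \<mu> P"
proof -
  define D where "D = {d. \<exists>P. annihilator P \<and> P \<noteq> 0 \<and> deg_le d P}"
  have "deg_le (\<Sum>\<alpha>\<in>keys P0. mdeg \<alpha>) P0"
    unfolding deg_le_def by (auto intro: member_le_sum)
  hence "(\<Sum>\<alpha>\<in>keys P0. mdeg \<alpha>) \<in> D" using assms unfolding D_def by blast
  define d where "d = (LEAST d. d \<in> D)"
  have "d \<in> D" unfolding d_def using \<open>_ \<in> D\<close> by (rule LeastI)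
  have below_d: "Q = 0" if "annihilator Q" "deg_lt d Q" for Q
  proof (rule ccontr)
    assume "Q \<noteq> 0"
    hence "d > 0" using that(2) by (cases d) (auto simp: deg_lt_def)
    moreover have "deg_le (d - 1) Q" using that(2) by (auto simp: deg_lt_def deg_le_def)
    with that \<open>Q \<noteq> 0\<close> have "d \<le> d - 1" unfolding d_def D_def by (intro Least_le) blast
    ultimately show False by simp
  qed
  obtain P where P: "annihilator P" "P \<noteq> 0" "deg_le d P"
    and P_min: "\<And>Q. annihilator Q \<Longrightarrow> Q \<noteq> 0 \<Longrightarrow> deg_le d Q \<Longrightarrow> top_count d P \<le> top_count d Q"
  proof -
    from \<open>d \<in> D\<close> obtain Q where "annihilator Q \<and> Q \<noteq> 0 \<and> deg_le d Q" unfolding D_def by blast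
    from ex_has_least_nat[of "\<lambda>Q. annihilator Q \<and> Q \<noteq> 0 \<and> deg_le d Q" Q "top_count d", OF this]
    show ?thesis using that by blast
  qed
  obtain \<mu> where \<mu>: "\<mu> \<in> keys P" "mdeg \<mu> = d"
  proof (rule ccontr)
    assume "\<not> thesis"
    hence "deg_lt d P" using P(3) that unfolding deg_le_def deg_lt_def by force
    with P below_d show False by blast
  qed
  define c where "c = lookup P \<mu>"
  have c: "c \<noteq> 0" "c \<in> F" using \<mu> P by (auto simp: c_def in_keys_iff annihilator_def coeffs_in_def)
  define P' where "P' = PConst (inverse c) * P"
  have keys_P': "keys P' = keys P" unfolding P'_def using c by (intro keys_PConst_mult) simp
  have "annihilator P'"
    using P c unfolding annihilator_def P'_def
    by (auto intro!: coeffs_in_mult coeffs_in_PConst F_inverse vars_in_mult vars_in_PConst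
        simp: peval_mult)
  moreover have "lookup P' \<mu> = 1" using c by (simp add: P'_def lookup_PConst_mult c_def)
  moreover have "deg_le d P'" "top_count d P' = top_count d P"
    using P(3) by (simp_all add: deg_le_def top_count_def keys_P')
  ultimately have "minimal_annihilator d \<mu> P'"
    using \<mu>(2) below_d P_min by (auto simp: minimal_annihilator_def)
  thus ?thesis by blast
qed

context
  fixes d \<mu> P assumes min: "minimal_annihilator d \<mu> P"
begin

lemma minimal_annihilator_deg_pos: "d > 0"
proof (rule ccontr)
  assume "\<not> d > 0"
  hence "deg_le 0 P" using min by (simp add: minimal_annihilator_def)
  hence "P = PConst (lookup P 0)" by (rule deg_le_0_imp_const)
  moreover have "\<mu> = 0" using min \<open>\<not> d > 0\<close> by (simp add: minimal_annihilator_def mdeg_eq_0_iff)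
  ultimately have "P = PConst 1" using min by (simp add: minimal_annihilator_def)
  thus False using min by (simp add: minimal_annihilator_def annihilator_def)
qed

text \<open>The minimal annihilator is invariant under the shift by \<open>\<sigma>\<close>: otherwise the
  difference would be an annihilator with fewer top-degree monomials (the coefficient at
  \<open>\<mu>\<close> cancels).\<close>

lemma minimal_annihilator_shift_invariant: "shift_poly \<sigma> b P = P"
proof (rule ccontr)
  define Q where "Q = shift_poly \<sigma> b P - P"
  assume "shift_poly \<sigma> b P \<noteq> P"
  hence "Q \<noteq> 0" by (simp add: Q_def)
  have P: "annihilator P" "deg_le d P" "mdeg \<mu> = d" "lookup P \<mu> = 1"
    using min by (auto simp: minimal_annihilator_def)
  have "annihilator Q"
  proof -
    have "coeffs_in F Q" "vars_in V Q" unfolding Q_def using P(1)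
      by (auto intro!: coeffs_in_diff coeffs_in_shift_poly vars_in_diff vars_in_shift_poly
          \<sigma>_F b_F simp: annihilator_def)
    moreover have "peval Q w = 0"
      using \<sigma>_peval_solution[of P w] \<sigma>_w P(1) by (simp add: Q_def peval_diff annihilator_def)
    ultimately show ?thesis by (simp add: annihilator_def)
  qed
  have "deg_le d Q" unfolding Q_def by (intro deg_le_diff deg_le_shift_poly P(2))
  have top: "lookup Q \<beta> = \<sigma> (lookup P \<beta>) - lookup P \<beta>" if "mdeg \<beta> = d" for \<beta>
  proof -
    have "deg_lt d (shift_poly \<sigma> b P - shift_poly \<sigma> (\<lambda>_. 0) P)" by (rule deg_lt_translation[OF P(2)])
    hence "lookup (shift_poly \<sigma> b P - shift_poly \<sigma> (\<lambda>_. 0) P) \<beta> = 0"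
      using that by (auto simp: deg_lt_def in_keys_iff)
    thus ?thesis by (simp add: Q_def lookup_minus lookup_shift_poly_no_translation)
  qed
  have "{\<beta>\<in>keys Q. mdeg \<beta> = d} \<subseteq> {\<beta>\<in>keys P. mdeg \<beta> = d} - {\<mu>}"
    using top P(4) by (auto simp: in_keys_iff \<sigma>_one)
  moreover have "\<mu> \<in> keys P" using P(4) by (simp add: in_keys_iff)
  ultimately have "top_count d Q < top_count d P"
    unfolding top_count_def using P(3)
    by (intro le_less_trans[OF card_mono card_Diff1_less]) auto
  with min \<open>annihilator Q\<close> \<open>Q \<noteq> 0\<close> \<open>deg_le d Q\<close> show False
    by (auto simp: minimal_annihilator_def not_less[symmetric])
qed

lemma minimal_annihilator_constant_value:
  assumes "\<And>v. v \<in> V \<Longrightarrow> \<sigma> (y v) = y v + b v"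
  shows "\<sigma> (peval P y) = peval P y"
  using \<sigma>_peval_solution[OF _ assms] minimal_annihilator_shift_invariant min
  by (simp add: minimal_annihilator_def annihilator_def)

text \<open>By minimality of the degree, moving one step in a coordinate direction changes the
  value of \<open>P\<close> by a constant, namely by the value of \<open>P\<close> at the moved point
  \<open>w\<close>.\<close>

lemma minimal_annihilator_increment:
  assumes "j \<in> V"
  shows "peval P (\<lambda>v. x v + (if v = j then 1 else 0)) =
      peval P x + peval P (\<lambda>v. w v + (if v = j then 1 else 0))"
proof -
  define e where "e = (\<lambda>v. if v = j then 1 else (0::'a))"
  define k where "k = peval P (\<lambda>v. w v + e v)"
  have P: "annihilator P" "deg_le d P" using min by (auto simp: minimal_annihilator_def)
  have "\<sigma> (k) = k"
    unfolding k_def by (rule minimal_annihilator_constant_value) (auto simp: \<sigma>_add \<sigma>_w \<sigma>_one e_def)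
  define Q where "Q = shift_poly id e P - P - PConst k"
  have "annihilator Q"
  proof -
    have "coeffs_in F Q" "vars_in V Q" unfolding Q_def using P(1) constants_in_F[OF \<open>\<sigma> k = k\<close>]
      by (auto intro!: coeffs_in_diff coeffs_in_shift_poly coeffs_in_PConst
          vars_in_diff vars_in_shift_poly vars_in_PConst simp: annihilator_def F_0 F_1 e_def)
    moreover have "peval Q w = 0"
      using P(1) by (simp add: Q_def peval_diff peval_shift_poly_id k_def annihilator_def)
    ultimately show ?thesis by (simp add: annihilator_def)
  qed
  moreover have "deg_lt d Q"
  proof -
    have "deg_lt d (shift_poly id e P - P)"
      using deg_lt_translation[OF P(2), of id] by (simp add: shift_poly_id_no_translation)
    moreover have "deg_lt d (PConst k)"
      using minimal_annihilator_deg_pos deg_lt_mono[OF deg_lt_PConst, of d] by simp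
    ultimately show ?thesis unfolding Q_def by (rule deg_lt_diff)
  qed
  ultimately have "Q = 0" using min by (simp add: minimal_annihilator_def)
  hence "peval Q x = 0" by simp
  hence "peval P (\<lambda>v. x v + e v) - peval P x - k = 0"
    by (simp only: Q_def peval_diff peval_shift_poly_id peval_PConst)
  thus ?thesis unfolding e_def k_def by (simp add: algebra_simps)
qed

end

text \<open>The Kolchin--Ostrowski theorem: if the \<open>w v\<close> are algebraically dependent over
  \<open>F\<close>, then some nontrivial linear combination of them with constant coefficients lies in
  \<open>F\<close>. Indeed the minimal annihilator is affine with constant linear coefficients.\<close>

theorem ostrowski:
  assumes "annihilator P0" "P0 \<noteq> 0"
  shows "\<exists>k. (\<forall>v\<in>V. \<sigma> (k v) = k v) \<and> (\<exists>v\<in>V. k v \<noteq> 0) \<and> (\<Sum>v\<in>V. k v * w v) \<in> F"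
proof -
  obtain d \<mu> P where min: "minimal_annihilator d \<mu> P"
    using minimal_annihilator_exists[OF assms] by blast
  define k where "k j = peval P (\<lambda>v. w v + (if v = j then 1 else 0))" for j
  define c0 where "c0 = peval P (\<lambda>_. 0)"
  have P: "annihilator P" "lookup P \<mu> = 1" using min by (auto simp: minimal_annihilator_def)
  have affine: "P = PConst c0 + (\<Sum>j\<in>V. PConst (k j) * PVar j)"
    unfolding c0_def
  proof (rule affine_if_constant_increments[OF finite_V])
    show "vars_in V P" using P(1) by (simp add: annihilator_def)
  qed (unfold k_def, rule minimal_annihilator_increment[OF min])
  have lin: "(\<Sum>j\<in>V. k j * w j) = - c0"
    using P(1) by (subst (asm) affine) (simp add: annihilator_def peval_add peval_sum peval_mult
        eq_neg_iff_add_eq_0 add.commute)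
  have "c0 \<in> F" using P(1) by (simp add: c0_def peval_origin annihilator_def coeffs_in_def)
  hence "(\<Sum>j\<in>V. k j * w j) \<in> F" unfolding lin by (rule F_uminus)
  moreover have "\<exists>j\<in>V. k j \<noteq> 0"
  proof (rule ccontr)
    assume "\<not> (\<exists>j\<in>V. k j \<noteq> 0)"
    hence "P = PConst c0" and "c0 = 0" using affine lin by simp_all
    thus False using P(2) by simp
  qed
  moreover have "\<sigma> (k j) = k j" if "j \<in> V" for j
    unfolding k_def using that
    by (intro minimal_annihilator_constant_value[OF min]) (auto simp: \<sigma>_add \<sigma>_w \<sigma>_one)
  ultimately show ?thesis by blast
qed

lemma linear_relation_annihilator:
  assumes "\<forall>v\<in>V. \<sigma> (k v) = k v" "j \<in> V" "k j \<noteq> 0" "(\<Sum>v\<in>V. k v * w v) \<in> F"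
  shows "annihilator ((\<Sum>v\<in>V. PConst (k v) * PVar v) - PConst (\<Sum>v\<in>V. k v * w v))"
    and "(\<Sum>v\<in>V. PConst (k v) * PVar v) - PConst (\<Sum>v\<in>V. k v * w v) \<noteq> 0"
proof -
  let ?P = "(\<Sum>v\<in>V. PConst (k v) * PVar v) - PConst (\<Sum>v\<in>V. k v * w v)"
  show "annihilator ?P"
    using assms(1,4) unfolding annihilator_def
    by (auto intro!: coeffs_in_diff coeffs_in_sum coeffs_in_mult coeffs_in_PConst coeffs_in_PVar
        constants_in_F vars_in_diff vars_in_sum vars_in_mult vars_in_PConst vars_in_PVar
        simp: peval_diff peval_sum peval_mult)
  have PVar: "lookup (PVar v) (single j 1) = (if v = j then 1 else 0)" for v :: 'v
  proof -
    have "single v (1::nat) = single j 1 \<longleftrightarrow> v = j"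
      by (metis lookup_single_eq lookup_single_not_eq zero_neq_one)
    thus ?thesis by (simp add: PVar_def lookup_single when_def)
  qed
  have single_j_nonzero: "single j (1::nat) \<noteq> 0"
    by (metis lookup_single_eq lookup_zero one_neq_zero)
  have "lookup ?P (single j 1) = (\<Sum>v\<in>V. k v * (if v = j then 1 else 0))"
    by (simp add: lookup_minus lookup_sum lookup_PConst_mult PVar del: One_nat_def)
       (use single_j_nonzero in \<open>simp add: PConst_def lookup_single when_def\<close>)
  also have "\<dots> = k j"
    using assms(2) finite_V by (simp add: if_distrib sum.delta cong: if_cong)
  finally show "?P \<noteq> 0" using assms(3) by auto
qed

end

section \<open>Meromorphic functions modulo equality outside a discrete set\<close>

lemma mero_on_imp_meromorphic:
  assumes "mero_on S f"
  shows "f meromorphic_on S"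
  unfolding meromorphic_on_meromorphic_at[of f S]
proof
  fix z assume z: "z \<in> S"
  from assms z obtain r n g where r: "r > 0" "ball z r \<subseteq> S" "g holomorphic_on ball z r"
    "\<forall>w\<in>ball z r - {z}. f w = g w / (w - z) ^ n"
    unfolding mero_on_def by blast
  have "g analytic_on ball z r" using r by (simp add: analytic_on_open)
  have "g analytic_on {z}" by (rule analytic_on_subset[OF \<open>g analytic_on ball z r\<close>]) (use r(1) in auto)
  hence "(\<lambda>w. g w / (w - z) ^ n) meromorphic_on {z}"
    by (intro meromorphic_intros analytic_on_imp_meromorphic_on) auto
  moreover have "eventually (\<lambda>w. g w / (w - z) ^ n = f w) (at z)"
  proof -
    have "eventually (\<lambda>w. w \<in> ball z r - {z}) (at z)"
      using r by (intro eventually_at_in_open) auto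
    thus ?thesis by eventually_elim (use r in auto)
  qed
  ultimately show "f meromorphic_on {z}"
    using meromorphic_on_cong[of "{z}" "\<lambda>w. g w / (w - z) ^ n" f "{z}"] by auto
qed

lemma meromorphic_imp_mero_on:
  assumes "f meromorphic_on S" "open S"
  shows "mero_on S f"
  unfolding mero_on_def
proof
  fix z assume z: "z \<in> S"
  have iso: "isolated_singularity_at f z" and ne: "not_essential f z"
    using assms z meromorphic_at_iff meromorphic_on_meromorphic_at by blast+
  obtain r0 where r0: "r0 > 0" "f analytic_on ball z r0 - {z}"
    using iso by (auto simp: isolated_singularity_at_def)
  obtain r1 where r1: "r1 > 0" "ball z r1 \<subseteq> S"
    using assms(2) z openE by blast
  define r2 where "r2 = min r0 r1"
  have r2: "r2 > 0" "ball z r2 \<subseteq> S" "f analytic_on ball z r2 - {z}"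
    using r0 r1 unfolding r2_def by (auto elim: analytic_on_subset)
  show "\<exists>r>0. ball z r \<subseteq> S \<and>
      (\<exists>n g. g holomorphic_on ball z r \<and> (\<forall>w\<in>ball z r - {z}. f w = g w / (w - z) ^ n))"
  proof (cases "is_pole f z")
    case True
    have "f holomorphic_on ball z r2 - {z}" using r2 by (simp add: analytic_imp_holomorphic)
    from zorder_exist_pole[OF this _ _ True] r2 obtain r where
      r: "r > 0" "cball z r \<subseteq> ball z r2" "zor_poly f z holomorphic_on cball z r"
      "\<forall>w\<in>cball z r - {z}. f w = zor_poly f z w / (w - z) ^ nat (- zorder f z)"
      by auto
    have "ball z r \<subseteq> S" using r r2 ball_subset_cball[of z r] by blast
    show ?thesis
      using r r2 ball_subset_cball[of z r] \<open>ball z r \<subseteq> S\<close>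
      by (intro exI[of _ r] conjI exI[of _ "nat (- zorder f z)"] exI[of _ "zor_poly f z"])
         (auto intro: holomorphic_on_subset)
  next
    case False
    then obtain c where c: "f \<midarrow>z\<rightarrow> c" using ne by (auto simp: not_essential_def)
    have "remove_sings f analytic_on {z}" by (rule remove_sings_analytic_at[OF iso c])
    then obtain r3 where r3: "r3 > 0" "remove_sings f holomorphic_on ball z r3"
      by (auto simp: analytic_on_def)
    have eq: "f w = remove_sings f w" if "w \<in> ball z (min r2 r3) - {z}" for w
    proof -
      have "f analytic_on {w}" by (rule analytic_on_subset[OF r2(3)]) (use that in auto)
      thus ?thesis by simp
    qed
    show ?thesis
      using r2 r3 eq
      by (intro exI[of _ "min r2 r3"] conjI exI[of _ "0::nat"] exI[of _ "remove_sings f"])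
         (auto intro: holomorphic_on_subset)
  qed
qed

lemma mero_on_iff: "open S \<Longrightarrow> mero_on S f \<longleftrightarrow> f meromorphic_on S"
  using mero_on_imp_meromorphic meromorphic_imp_mero_on by blast

lemma meq_refl: "meq S f f"
  by (simp add: meq_def)

lemma meq_const_iff: "S \<noteq> {} \<Longrightarrow> meq S (\<lambda>_. a) (\<lambda>_. b) \<longleftrightarrow> a = b"
  by (auto simp: meq_def trivial_limit_at)

lemma meq_mult_left: "meq S f g \<Longrightarrow> meq S (\<lambda>w. h w * f w) (\<lambda>w. h w * g w)"
  unfolding meq_def by (auto elim!: eventually_mono)

lemma mero_eventually_nonzero:
  assumes "f meromorphic_on S" "open S" "connected S" "\<not> meq S f (\<lambda>_. 0)" "z \<in> S"
  shows "eventually (\<lambda>w. f w \<noteq> 0) (at z)"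
proof -
  have "\<not> eventually (\<lambda>z. f z = 0) (cosparse S)"
    using assms(4) by (simp add: eventually_cosparse_open_eq[OF assms(2)] meq_def)
  hence "eventually (\<lambda>z. f z \<noteq> 0) (cosparse S)"
    using meromorphic_imp_constant_or_avoid[OF assms(1-3), of 0] by blast
  thus ?thesis
    using assms(5) by (simp add: eventually_cosparse_open_eq[OF assms(2)])
qed

definition mrel :: "complex set \<Rightarrow> (complex \<Rightarrow> complex) \<Rightarrow> (complex \<Rightarrow> complex) \<Rightarrow> bool" where
  "mrel S f g \<longleftrightarrow> f meromorphic_on S \<and> g meromorphic_on S \<and> meq S f g"

lemma part_equivp_mrel: "part_equivp (mrel S)"
proof (rule part_equivpI)
  show "\<exists>x. mrel S x x" by (rule exI[of _ "\<lambda>_. 0"]) (auto simp: mrel_def meq_def)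
  show "symp (mrel S)"
    unfolding symp_def mrel_def meq_def by (metis (mono_tags, lifting) eventually_mono)
  show "transp (mrel S)"
    unfolding transp_def mrel_def meq_def
  proof (intro allI impI conjI ballI; elim conjE)
    fix f g h z
    assume "\<forall>z\<in>S. eventually (\<lambda>w. f w = g w) (at z)" "\<forall>z\<in>S. eventually (\<lambda>w. g w = h w) (at z)"
      "z \<in> S"
    hence "eventually (\<lambda>w. f w = g w) (at z)" "eventually (\<lambda>w. g w = h w) (at z)" by auto
    thus "eventually (\<lambda>w. f w = h w) (at z)" by eventually_elim simp
  qed
qed

lemma mrel_const: "mrel S (\<lambda>_. c) (\<lambda>_. c)"
  by (auto simp: mrel_def meq_def)

lemma meq_binop:
  assumes "meq S f f'" "meq S g g'"
  shows "meq S (\<lambda>w. h (f w) (g w)) (\<lambda>w. h (f' w) (g' w))"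
  unfolding meq_def
proof
  fix z assume "z \<in> S"
  hence "eventually (\<lambda>w. f w = f' w) (at z)" "eventually (\<lambda>w. g w = g' w) (at z)"
    using assms by (auto simp: meq_def)
  thus "eventually (\<lambda>w. h (f w) (g w) = h (f' w) (g' w)) (at z)" by eventually_elim simp
qed

lemma mrel_add: "mrel S f f' \<Longrightarrow> mrel S g g' \<Longrightarrow> mrel S (\<lambda>w. f w + g w) (\<lambda>w. f' w + g' w)"
  and mrel_mult: "mrel S f f' \<Longrightarrow> mrel S g g' \<Longrightarrow> mrel S (\<lambda>w. f w * g w) (\<lambda>w. f' w * g' w)"
  unfolding mrel_def
  using meq_binop[of S f f' g g' "(+)"] meq_binop[of S f f' g g' "(*)"]
  by (auto intro!: meromorphic_intros)

lemma mrel_uminus: "mrel S f f' \<Longrightarrow> mrel S (\<lambda>w. - f w) (\<lambda>w. - f' w)"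
  and mrel_inverse: "mrel S f f' \<Longrightarrow> mrel S (\<lambda>w. inverse (f w)) (\<lambda>w. inverse (f' w))"
  unfolding mrel_def meq_def
  by (auto intro!: meromorphic_intros elim!: ballE eventually_mono)

text \<open>Multiplicative inverses exist because \<open>S\<close> is connected.\<close>

lemma mrel_inverse_mult:
  assumes "open S" "connected S" "mrel S f f" "\<not> mrel S f (\<lambda>_. 0)"
  shows "mrel S (\<lambda>w. inverse (f w) * f w) (\<lambda>_. 1)"
proof -
  have f: "f meromorphic_on S" "\<not> meq S f (\<lambda>_. 0)"
    using assms(3,4) by (auto simp: mrel_def meromorphic_on_const)
  have "meq S (\<lambda>w. inverse (f w) * f w) (\<lambda>_. 1)"
    unfolding meq_def
  proof
    fix z assume "z \<in> S"
    from mero_eventually_nonzero[OF f(1) assms(1,2) f(2) this]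
    show "eventually (\<lambda>w. inverse (f w) * f w = 1) (at z)"
      by eventually_elim simp
  qed
  thus ?thesis using f by (auto simp: mrel_def intro!: meromorphic_intros)
qed

lemma eventually_at_affine:
  fixes c1 c0 z :: complex
  assumes "c1 \<noteq> 0" "eventually P (at (c1 * z + c0))"
  shows "eventually (\<lambda>w. P (c1 * w + c0)) (at z)"
proof -
  have "filterlim (\<lambda>w. c1 * w + c0) (at (c1 * z + c0)) (at z)"
    unfolding filterlim_at
  proof
    show "eventually (\<lambda>w. c1 * w + c0 \<in> UNIV \<and> c1 * w + c0 \<noteq> c1 * z + c0) (at z)"
      using assms(1) by (auto simp: eventually_at_filter intro!: always_eventually)
    show "((\<lambda>w. c1 * w + c0) \<longlongrightarrow> c1 * z + c0) (at z)"
      by (intro tendsto_intros)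
  qed
  thus ?thesis using assms(2) by (simp add: filterlim_iff)
qed

lemma meq_affine:
  assumes "c1 \<noteq> 0" "\<And>w. w \<in> S \<Longrightarrow> c1 * w + c0 \<in> S" "meq S f g"
  shows "meq S (\<lambda>w. f (c1 * w + c0)) (\<lambda>w. g (c1 * w + c0))"
  unfolding meq_def
proof
  fix z assume "z \<in> S"
  hence "eventually (\<lambda>w. f w = g w) (at (c1 * z + c0))" using assms by (auto simp: meq_def)
  thus "eventually (\<lambda>w. f (c1 * w + c0) = g (c1 * w + c0)) (at z)"
    using eventually_at_affine[OF assms(1), of "\<lambda>w. f w = g w"] by simp
qed

lemma mero_affine:
  assumes "f meromorphic_on S" "\<And>w. w \<in> S \<Longrightarrow> c1 * w + c0 \<in> S"
  shows "(\<lambda>w. f (c1 * w + c0)) meromorphic_on S"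
  by (rule meromorphic_on_compose[OF assms(1)]) (use assms(2) in \<open>auto intro!: analytic_intros\<close>)

lemma mero_eventually_analytic:
  assumes "f meromorphic_on S" "z \<in> S"
  shows "eventually (\<lambda>w. f analytic_on {w}) (at z)"
proof -
  have "isolated_singularity_at f z"
    using assms by (intro meromorphic_on_isolated_singularity meromorphic_on_subset[OF assms(1)]) auto
  then obtain r where r: "r > 0" "f analytic_on ball z r - {z}"
    by (auto simp: isolated_singularity_at_def)
  have "eventually (\<lambda>w. w \<in> ball z r - {z}) (at z)"
    using r by (intro eventually_at_in_open) auto
  thus ?thesis by eventually_elim (use r in \<open>auto intro: analytic_on_subset\<close>)
qed

lemma eventually_at_deriv_eq:
  assumes "eventually (\<lambda>w. f w = g w) (at z)"
  shows "eventually (\<lambda>w. deriv f w = deriv g w) (at z)"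
proof -
  obtain U where U: "open U" "z \<in> U" "\<And>w. w \<in> U \<Longrightarrow> w \<noteq> z \<Longrightarrow> f w = g w"
    using assms unfolding eventually_at_topological by blast
  have "eventually (\<lambda>w. w \<in> U - {z}) (at z)"
    using U by (intro eventually_at_in_open) auto
  thus ?thesis
  proof eventually_elim
    case (elim w)
    have "eventually (\<lambda>x. x \<in> U - {z}) (nhds w)"
      using elim U by (intro eventually_nhds_in_open) auto
    hence "eventually (\<lambda>x. f x = g x) (nhds w)" by eventually_elim (use U in auto)
    thus ?case by (rule deriv_cong_ev) simp
  qed
qed

lemma meq_deriv: "meq S f g \<Longrightarrow> meq S (deriv f) (deriv g)"
  unfolding meq_def using eventually_at_deriv_eq by blast

lemma meq_deriv_add:
  assumes "f meromorphic_on S" "g meromorphic_on S"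
  shows "meq S (deriv (\<lambda>w. f w + g w)) (\<lambda>w. deriv f w + deriv g w)"
  unfolding meq_def
proof
  fix z assume z: "z \<in> S"
  from mero_eventually_analytic[OF assms(1) z] mero_eventually_analytic[OF assms(2) z]
  show "eventually (\<lambda>w. deriv (\<lambda>w. f w + g w) w = deriv f w + deriv g w) (at z)"
    by eventually_elim (auto intro!: deriv_add analytic_on_imp_differentiable_at)
qed

lemma meq_deriv_affine:
  assumes "f meromorphic_on S" "c1 \<noteq> 0" "\<And>w. w \<in> S \<Longrightarrow> c1 * w + c0 \<in> S"
  shows "meq S (deriv (\<lambda>x. f (c1 * x + c0))) (\<lambda>w. c1 * deriv f (c1 * w + c0))"
  unfolding meq_def
proof
  fix z assume z: "z \<in> S"
  have "eventually (\<lambda>w. f analytic_on {w}) (at (c1 * z + c0))"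
    using assms z by (intro mero_eventually_analytic) auto
  from eventually_at_affine[OF assms(2) this]
  show "eventually (\<lambda>w. deriv (\<lambda>x. f (c1 * x + c0)) w = c1 * deriv f (c1 * w + c0)) (at z)"
  proof eventually_elim
    case (elim w)
    hence "DERIV f (c1 * w + c0) :> deriv f (c1 * w + c0)"
      by (simp add: DERIV_deriv_iff_field_differentiable analytic_on_imp_differentiable_at)
    moreover have "((\<lambda>x. c1 * x + c0) has_field_derivative c1) (at w)"
      by (auto intro!: derivative_eq_intros)
    ultimately have "((\<lambda>x. f (c1 * x + c0)) has_field_derivative deriv f (c1 * w + c0) * c1) (at w)"
      using DERIV_chain by (simp add: o_def)
    thus ?case by (simp add: DERIV_imp_deriv mult.commute)
  qed
qed

section \<open>Difference-differential relations in a field model\<close>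

locale mero_model =
  fixes S :: "complex set" and cls :: "(complex \<Rightarrow> complex) \<Rightarrow> 'a::field_char_0"
    and \<sigma>f \<delta>f :: "(complex \<Rightarrow> complex) \<Rightarrow> complex \<Rightarrow> complex"
    and F :: "(complex \<Rightarrow> complex) set"
  assumes open_S: "open S"
    and cls_eq_iff: "f meromorphic_on S \<Longrightarrow> g meromorphic_on S \<Longrightarrow> cls f = cls g \<longleftrightarrow> meq S f g"
    and cls_surj: "\<exists>f. f meromorphic_on S \<and> x = cls f"
    and cls_add: "f meromorphic_on S \<Longrightarrow> g meromorphic_on S \<Longrightarrow> cls (\<lambda>w. f w + g w) = cls f + cls g"
    and cls_mult: "f meromorphic_on S \<Longrightarrow> g meromorphic_on S \<Longrightarrow> cls (\<lambda>w. f w * g w) = cls f * cls g"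
    and cls_uminus: "f meromorphic_on S \<Longrightarrow> cls (\<lambda>w. - f w) = - cls f"
    and cls_inverse: "f meromorphic_on S \<Longrightarrow> cls (\<lambda>w. inverse (f w)) = inverse (cls f)"
    and cls_zero: "cls (\<lambda>_. 0) = 0" and cls_one: "cls (\<lambda>_. 1) = 1"
    and \<sigma>f_mero: "f meromorphic_on S \<Longrightarrow> \<sigma>f f meromorphic_on S"
    and \<sigma>f_meq: "meq S f g \<Longrightarrow> meq S (\<sigma>f f) (\<sigma>f g)"
    and \<sigma>f_add: "\<sigma>f (\<lambda>w. f w + g w) = (\<lambda>w. \<sigma>f f w + \<sigma>f g w)"
    and \<sigma>f_mult: "\<sigma>f (\<lambda>w. f w * g w) = (\<lambda>w. \<sigma>f f w * \<sigma>f g w)"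
    and \<sigma>f_const: "\<sigma>f (\<lambda>_. c) = (\<lambda>_. c)"
    and \<delta>f_mero: "f meromorphic_on S \<Longrightarrow> \<delta>f f meromorphic_on S"
    and \<delta>f_meq: "meq S f g \<Longrightarrow> meq S (\<delta>f f) (\<delta>f g)"
    and \<delta>f_add: "f meromorphic_on S \<Longrightarrow> g meromorphic_on S \<Longrightarrow>
      meq S (\<delta>f (\<lambda>w. f w + g w)) (\<lambda>w. \<delta>f f w + \<delta>f g w)"
    and \<delta>f_\<sigma>f: "f meromorphic_on S \<Longrightarrow> meq S (\<delta>f (\<sigma>f f)) (\<sigma>f (\<delta>f f))"
    and F_subfield: "mero_subfield S F"
    and F_\<sigma>f: "f \<in> F \<Longrightarrow> \<sigma>f f \<in> F" and F_\<delta>f: "f \<in> F \<Longrightarrow> \<delta>f f \<in> F"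
    and F_constants: "p meromorphic_on S \<Longrightarrow> meq S (\<sigma>f p) p \<Longrightarrow> p \<in> F"
begin

lemma F_mero: "f \<in> F \<Longrightarrow> f meromorphic_on S"
  using F_subfield open_S by (auto simp: mero_subfield_def mero_on_iff)

lemma F_0: "(\<lambda>_. 0) \<in> F" and F_1: "(\<lambda>_. 1) \<in> F"
  and F_add: "f \<in> F \<Longrightarrow> g \<in> F \<Longrightarrow> (\<lambda>w. f w + g w) \<in> F"
  and F_mult: "f \<in> F \<Longrightarrow> g \<in> F \<Longrightarrow> (\<lambda>w. f w * g w) \<in> F"
  and F_uminus: "f \<in> F \<Longrightarrow> (\<lambda>w. - f w) \<in> F"
  and F_inverse: "f \<in> F \<Longrightarrow> \<not> meq S f (\<lambda>_. 0) \<Longrightarrow> (\<lambda>w. inverse (f w)) \<in> F"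
  using F_subfield by (auto simp: mero_subfield_def)

lemma cls_diff: "f meromorphic_on S \<Longrightarrow> g meromorphic_on S \<Longrightarrow> cls (\<lambda>w. f w - g w) = cls f - cls g"
  using cls_add[of f "\<lambda>w. - g w"] cls_uminus[of g] by (simp add: meromorphic_intros)

lemma cls_sum:
  "(\<And>i. i \<in> I \<Longrightarrow> f i meromorphic_on S) \<Longrightarrow> cls (\<lambda>w. \<Sum>i\<in>I. f i w) = (\<Sum>i\<in>I. cls (f i))"
proof (induction I rule: infinite_finite_induct)
  case (insert i I) thus ?case by (simp add: cls_add meromorphic_intros)
qed (simp_all add: cls_zero)

lemma cls_prod:
  "(\<And>i. i \<in> I \<Longrightarrow> f i meromorphic_on S) \<Longrightarrow> cls (\<lambda>w. \<Prod>i\<in>I. f i w) = (\<Prod>i\<in>I. cls (f i))"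
proof (induction I rule: infinite_finite_induct)
  case (insert i I) thus ?case by (simp add: cls_mult meromorphic_intros)
qed (simp_all add: cls_one)

lemma cls_power: "f meromorphic_on S \<Longrightarrow> cls (\<lambda>w. f w ^ n) = cls f ^ n"
  by (induction n) (simp_all add: cls_mult cls_one meromorphic_intros)

lemma cls_eq_0_iff: "f meromorphic_on S \<Longrightarrow> cls f = 0 \<longleftrightarrow> meq S f (\<lambda>_. 0)"
  using cls_eq_iff[of f "\<lambda>_. 0"] by (simp add: cls_zero meromorphic_on_const)

definition rep :: "'a \<Rightarrow> complex \<Rightarrow> complex" where
  "rep x = (SOME f. f meromorphic_on S \<and> x = cls f)"

lemma rep: "rep x meromorphic_on S" "cls (rep x) = x"
  using someI_ex[OF cls_surj[of x]] by (auto simp: rep_def)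

definition \<sigma> :: "'a \<Rightarrow> 'a" where "\<sigma> x = cls (\<sigma>f (rep x))"
definition \<delta> :: "'a \<Rightarrow> 'a" where "\<delta> x = cls (\<delta>f (rep x))"

lemma \<sigma>_cls: "f meromorphic_on S \<Longrightarrow> \<sigma> (cls f) = cls (\<sigma>f f)"
  using rep[of "cls f"] by (simp add: \<sigma>_def cls_eq_iff \<sigma>f_mero \<sigma>f_meq)

lemma \<delta>_cls: "f meromorphic_on S \<Longrightarrow> \<delta> (cls f) = cls (\<delta>f f)"
  using rep[of "cls f"] by (simp add: \<delta>_def cls_eq_iff \<delta>f_mero \<delta>f_meq)

lemma \<sigma>_add: "\<sigma> (x + y) = \<sigma> x + \<sigma> y"
  and \<sigma>_mult: "\<sigma> (x * y) = \<sigma> x * \<sigma> y"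
proof -
  obtain f g where fg: "f meromorphic_on S" "g meromorphic_on S" "x = cls f" "y = cls g"
    using cls_surj by metis
  show "\<sigma> (x + y) = \<sigma> x + \<sigma> y"
    using fg by (simp add: cls_add \<sigma>_cls \<sigma>f_add \<sigma>f_mero meromorphic_intros flip: cls_add)
  show "\<sigma> (x * y) = \<sigma> x * \<sigma> y"
    using fg by (simp add: cls_mult \<sigma>_cls \<sigma>f_mult \<sigma>f_mero meromorphic_intros flip: cls_mult)
qed

lemma \<sigma>_one: "\<sigma> 1 = 1"
  using \<sigma>_cls[of "\<lambda>_. 1"] by (simp add: cls_one \<sigma>f_const meromorphic_on_const)

lemma \<delta>_add: "\<delta> (x + y) = \<delta> x + \<delta> y"
proof -
  obtain f g where fg: "f meromorphic_on S" "g meromorphic_on S" "x = cls f" "y = cls g"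
    using cls_surj by metis
  have "\<delta> (x + y) = cls (\<delta>f (\<lambda>w. f w + g w))"
    using fg by (simp add: \<delta>_cls meromorphic_intros flip: cls_add)
  also have "\<dots> = cls (\<lambda>w. \<delta>f f w + \<delta>f g w)"
    using fg by (simp add: cls_eq_iff \<delta>f_add \<delta>f_mero meromorphic_intros)
  finally show ?thesis using fg by (simp add: cls_add \<delta>_cls \<delta>f_mero)
qed

lemma \<delta>_\<sigma>: "\<delta> (\<sigma> x) = \<sigma> (\<delta> x)"
proof -
  obtain f where f: "f meromorphic_on S" "x = cls f" using cls_surj by metis
  thus ?thesis
    using \<delta>f_\<sigma>f[OF f(1)] by (simp add: \<sigma>_cls \<delta>_cls \<sigma>f_mero \<delta>f_mero cls_eq_iff)
qed

lemma \<delta>_power_add: "(\<delta> ^^ k) (x + y) = (\<delta> ^^ k) x + (\<delta> ^^ k) y"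
  by (induction k) (auto simp: \<delta>_add)

lemma \<delta>_power_\<sigma>: "(\<delta> ^^ k) (\<sigma> x) = \<sigma> ((\<delta> ^^ k) x)"
  by (induction k) (auto simp: \<delta>_\<sigma>)

lemma \<delta>f_power_mero: "f meromorphic_on S \<Longrightarrow> (\<delta>f ^^ k) f meromorphic_on S"
  by (induction k) (auto intro: \<delta>f_mero)

lemma \<delta>_power_cls: "f meromorphic_on S \<Longrightarrow> (\<delta> ^^ k) (cls f) = cls ((\<delta>f ^^ k) f)"
  by (induction k) (auto simp: \<delta>_cls \<delta>f_power_mero)

lemma \<delta>f_power_F: "f \<in> F \<Longrightarrow> (\<delta>f ^^ k) f \<in> F"
  by (induction k) (auto intro: F_\<delta>f)

lemma \<sigma>_fixed_iff: "f meromorphic_on S \<Longrightarrow> \<sigma> (cls f) = cls f \<longleftrightarrow> meq S (\<sigma>f f) f"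
  by (simp add: \<sigma>_cls cls_eq_iff \<sigma>f_mero)

definition FL :: "'a set" where "FL = cls ` F"

lemma FL_0: "0 \<in> FL" and FL_1: "1 \<in> FL"
  using F_0 F_1 cls_zero cls_one unfolding FL_def by (metis image_eqI)+

lemma difference_field_FL: "difference_field FL \<sigma>"
proof
  fix x y assume "x \<in> FL" "y \<in> FL"
  then obtain f g where fg: "f \<in> F" "g \<in> F" "x = cls f" "y = cls g" by (auto simp: FL_def)
  show "x + y \<in> FL" unfolding FL_def using fg
    by (intro image_eqI[of _ _ "\<lambda>w. f w + g w"]) (auto simp: cls_add F_mero F_add)
  show "x * y \<in> FL" unfolding FL_def using fg
    by (intro image_eqI[of _ _ "\<lambda>w. f w * g w"]) (auto simp: cls_mult F_mero F_mult)
next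
  fix x assume "x \<in> FL"
  then obtain f where f: "f \<in> F" "x = cls f" by (auto simp: FL_def)
  show "- x \<in> FL" unfolding FL_def using f
    by (intro image_eqI[of _ _ "\<lambda>w. - f w"]) (auto simp: cls_uminus F_mero F_uminus)
  show "\<sigma> x \<in> FL" unfolding FL_def using f
    by (intro image_eqI[of _ _ "\<sigma>f f"]) (auto simp: \<sigma>_cls F_mero F_\<sigma>f)
  show "inverse x \<in> FL"
  proof (cases "meq S f (\<lambda>_. 0)")
    case True
    hence "x = 0" using f by (simp add: cls_eq_0_iff F_mero)
    thus ?thesis using FL_0 by simp
  next
    case False
    thus ?thesis unfolding FL_def using f
      by (intro image_eqI[of _ _ "\<lambda>w. inverse (f w)"]) (auto simp: cls_inverse F_mero F_inverse)
  qed
next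
  fix x assume "\<sigma> x = x"
  hence "rep x \<in> F" using rep[of x] \<sigma>_fixed_iff[of "rep x"] F_constants by auto
  thus "x \<in> FL" using rep(2)[of x] unfolding FL_def by (metis image_eqI)
qed (auto simp: \<sigma>_add \<sigma>_mult \<sigma>_one FL_0 FL_1)

sublocale FL: difference_field FL \<sigma>
  by (rule difference_field_FL)

text \<open>In the field model, the derivatives \<open>W (i, k)\<close> of the \<open>z i\<close> satisfy
  \<open>\<sigma> (W (i, k)) = W (i, k) + B (i, k)\<close> where \<open>B (i, k)\<close> is the \<open>k\<close>-th derivative
  of \<open>a i\<close>; so the Kolchin--Ostrowski theorem applies to them.\<close>

context
  fixes n :: nat and a z :: "nat \<Rightarrow> complex \<Rightarrow> complex"
  assumes a_F: "\<And>i. i < n \<Longrightarrow> a i \<in> F"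
    and z_mero: "\<And>i. i < n \<Longrightarrow> z i meromorphic_on S"
    and z_eq: "\<And>i. i < n \<Longrightarrow> meq S (\<lambda>w. \<sigma>f (z i) w - z i w) (a i)"
begin

definition W :: "nat \<times> nat \<Rightarrow> 'a" where "W v = cls ((\<delta>f ^^ snd v) (z (fst v)))"
definition B :: "nat \<times> nat \<Rightarrow> 'a" where "B v = cls ((\<delta>f ^^ snd v) (a (fst v)))"

abbreviation grid :: "nat \<Rightarrow> (nat \<times> nat) set" where "grid m \<equiv> {..<n} \<times> {..m}"

lemma \<sigma>_W: "fst v < n \<Longrightarrow> \<sigma> (W v) = W v + B v"
proof -
  assume i: "fst v < n"
  define i k where "i = fst v" and "k = snd v"
  have zi: "z i meromorphic_on S" and ai: "a i meromorphic_on S"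
    using i z_mero a_F F_mero by (auto simp: i_def)
  have "cls (\<lambda>w. \<sigma>f (z i) w - z i w) = cls (a i)"
    using z_eq[of i] i zi ai by (subst cls_eq_iff) (auto simp: i_def intro!: meromorphic_intros \<sigma>f_mero)
  hence \<sigma>_zi: "\<sigma> (cls (z i)) = cls (z i) + cls (a i)"
    using zi by (simp add: cls_diff \<sigma>f_mero \<sigma>_cls algebra_simps)
  have "\<sigma> (W v) = \<sigma> ((\<delta> ^^ k) (cls (z i)))" by (simp add: W_def i_def k_def \<delta>_power_cls zi[unfolded i_def])
  also have "\<dots> = (\<delta> ^^ k) (cls (z i)) + (\<delta> ^^ k) (cls (a i))"
    by (simp add: \<delta>_power_\<sigma>[symmetric] \<sigma>_zi \<delta>_power_add)
  also have "\<dots> = W v + B v"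
    by (simp add: W_def B_def i_def k_def \<delta>_power_cls zi[unfolded i_def] ai[unfolded i_def])
  finally show ?thesis .
qed

lemma B_FL: "fst v < n \<Longrightarrow> B v \<in> FL"
  using a_F by (auto simp: B_def FL_def intro!: \<delta>f_power_F)

lemma ostrowski_setting_grid: "ostrowski_setting FL \<sigma> (grid m) W B"
  by (intro ostrowski_setting.intro difference_field_FL ostrowski_setting_axioms.intro)
     (auto simp: B_FL \<sigma>_W)

lemma derivatives_mero: "fst v < n \<Longrightarrow> (\<delta>f ^^ snd v) (z (fst v)) meromorphic_on S"
  using z_mero by (auto intro: \<delta>f_power_mero)

lemma cls_differential_poly:
  fixes m :: nat
  assumes "\<And>\<alpha>. \<alpha> \<in> M \<Longrightarrow> c \<alpha> meromorphic_on S"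
  defines "expr \<equiv> \<lambda>w. \<Sum>\<alpha>\<in>M. c \<alpha> w * (\<Prod>(i, k)\<in>grid m. ((\<delta>f ^^ k) (z i) w) ^ \<alpha> (i, k))"
  shows "expr meromorphic_on S"
    and "cls expr = (\<Sum>\<alpha>\<in>M. cls (c \<alpha>) * (\<Prod>v\<in>grid m. W v ^ \<alpha> v))"
proof -
  let ?d = "\<lambda>v. (\<delta>f ^^ snd v) (z (fst v))"
  have expr: "expr = (\<lambda>w. \<Sum>\<alpha>\<in>M. c \<alpha> w * (\<Prod>v\<in>grid m. ?d v w ^ \<alpha> v))"
    by (simp add: expr_def case_prod_unfold)
  have m1: "(\<lambda>w. ?d v w ^ \<alpha> v) meromorphic_on S" if "v \<in> grid m" for v \<alpha>
    using derivatives_mero[of v] that by (auto intro!: meromorphic_intros)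
  have m2: "(\<lambda>w. \<Prod>v\<in>grid m. ?d v w ^ \<alpha> v) meromorphic_on S" for \<alpha>
    by (intro meromorphic_intros m1) (use derivatives_mero in auto)
  show "expr meromorphic_on S"
    unfolding expr using assms(1) m2 by (intro meromorphic_intros) (auto intro!: \<delta>f_power_mero z_mero)
  have "cls expr = (\<Sum>\<alpha>\<in>M. cls (c \<alpha>) * cls (\<lambda>w. \<Prod>v\<in>grid m. ?d v w ^ \<alpha> v))"
    unfolding expr using assms(1) m2
    by (subst cls_sum) (auto intro!: meromorphic_intros sum.cong cls_mult \<delta>f_power_mero z_mero)
  also have "\<dots> = (\<Sum>\<alpha>\<in>M. cls (c \<alpha>) * (\<Prod>v\<in>grid m. W v ^ \<alpha> v))"
    using m1 derivatives_mero by (intro sum.cong refl arg_cong2[where f = "(*)"])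
      (auto simp: cls_prod cls_power W_def intro!: prod.cong)
  finally show "cls expr = (\<Sum>\<alpha>\<in>M. cls (c \<alpha>) * (\<Prod>v\<in>grid m. W v ^ \<alpha> v))" .
qed

lemma cls_linear_differential:
  fixes m :: nat
  assumes "\<And>i k. i < n \<Longrightarrow> k \<le> m \<Longrightarrow> c i k meromorphic_on S"
    and "\<And>i. i < n \<Longrightarrow> g i meromorphic_on S"
  defines "expr \<equiv> \<lambda>w. \<Sum>i<n. \<Sum>k\<le>m. c i k w * (\<delta>f ^^ k) (g i) w"
  shows "expr meromorphic_on S"
    and "cls expr = (\<Sum>v\<in>grid m. cls (c (fst v) (snd v)) * cls ((\<delta>f ^^ snd v) (g (fst v))))"
proof -
  have m1: "(\<lambda>w. c i k w * (\<delta>f ^^ k) (g i) w) meromorphic_on S" if "i < n" "k \<le> m" for i k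
    using assms that by (auto intro!: meromorphic_intros \<delta>f_power_mero)
  have m2: "(\<lambda>w. \<Sum>k\<le>m. c i k w * (\<delta>f ^^ k) (g i) w) meromorphic_on S" if "i < n" for i
    by (rule meromorphic_on_sum) (use m1 that in auto)
  show "expr meromorphic_on S"
    unfolding expr_def by (rule meromorphic_on_sum) (use m2 in auto)
  have "cls expr = (\<Sum>i<n. cls (\<lambda>w. \<Sum>k\<le>m. c i k w * (\<delta>f ^^ k) (g i) w))"
    unfolding expr_def using m2 by (intro cls_sum) auto
  also have "\<dots> = (\<Sum>i<n. \<Sum>k\<le>m. cls (\<lambda>w. c i k w * (\<delta>f ^^ k) (g i) w))"
    using m1 by (intro sum.cong refl cls_sum) auto
  also have "\<dots> = (\<Sum>i<n. \<Sum>k\<le>m. cls (c i k) * cls ((\<delta>f ^^ k) (g i)))"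
    using assms(1,2) by (intro sum.cong refl cls_mult) (auto intro: \<delta>f_power_mero)
  finally show "cls expr = (\<Sum>v\<in>grid m. cls (c (fst v) (snd v)) * cls ((\<delta>f ^^ snd v) (g (fst v))))"
    by (simp add: sum.cartesian_product case_prod_unfold)
qed

lemma dependent_imp_annihilator:
  assumes "diff_alg_dependent S \<delta>f F n z"
  shows "\<exists>m P. P \<noteq> 0 \<and> coeffs_in FL P \<and> vars_in (grid m) P \<and> peval P W = 0"
proof -
  obtain M m c where M: "finite M" "M \<subseteq> {\<alpha>. \<forall>i k. \<alpha> (i, k) \<noteq> 0 \<longrightarrow> i < n \<and> k \<le> m}"
      "\<forall>\<alpha>\<in>M. c \<alpha> \<in> F" "\<exists>\<alpha>\<in>M. \<not> meq S (c \<alpha>) (\<lambda>_. 0)"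
    and rel: "meq S (\<lambda>w. \<Sum>\<alpha>\<in>M. c \<alpha> w *
                    (\<Prod>(i, k)\<in>grid m. ((\<delta>f ^^ k) (z i) w) ^ \<alpha> (i, k))) (\<lambda>_. 0)"
    using assms unfolding diff_alg_dependent_def by blast
  have c_mero: "\<And>\<alpha>. \<alpha> \<in> M \<Longrightarrow> c \<alpha> meromorphic_on S" using M(3) F_mero by blast
  note expr = cls_differential_poly[of M c m, OF c_mero]
  have rel_cls: "(\<Sum>\<alpha>\<in>M. cls (c \<alpha>) * (\<Prod>v\<in>grid m. W v ^ \<alpha> v)) = 0"
    using rel cls_eq_0_iff[OF expr(1)] expr(2) by simp
  have supp: "{v. \<alpha> v \<noteq> 0} \<subseteq> grid m" if "\<alpha> \<in> M" for \<alpha>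
    using M(2) that by auto
  have lookup_monomial: "lookup (Abs_poly_mapping \<alpha>) = \<alpha>" if "\<alpha> \<in> M" for \<alpha>
    using supp[OF that] by (intro lookup_Abs_poly_mapping) (auto intro: finite_subset)
  have keys_monomial: "keys (Abs_poly_mapping \<alpha>) \<subseteq> grid m" if "\<alpha> \<in> M" for \<alpha>
    using supp[OF that] lookup_monomial[OF that] by (auto simp: in_keys_iff)
  define P where "P = (\<Sum>\<alpha>\<in>M. single (Abs_poly_mapping \<alpha>) (cls (c \<alpha>)))"
  have lookup_P: "lookup P \<beta> = (\<Sum>\<alpha>\<in>M. (cls (c \<alpha>) when Abs_poly_mapping \<alpha> = \<beta>))" for \<beta>
    by (simp add: P_def lookup_sum lookup_single)
  have "coeffs_in FL P"
    using M(3) unfolding P_def by (intro FL.coeffs_in_sum FL.coeffs_in_single) (auto simp: FL_def)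
  moreover have "vars_in (grid m) P"
    unfolding P_def by (intro vars_in_sum) (use keys_monomial in \<open>auto simp: vars_in_def\<close>)
  moreover have "peval P W = 0"
  proof -
    have "monom_val (Abs_poly_mapping \<alpha>) W = (\<Prod>v\<in>grid m. W v ^ \<alpha> v)" if "\<alpha> \<in> M" for \<alpha>
      using monom_val_superset[of "grid m" "Abs_poly_mapping \<alpha>" W] keys_monomial[OF that]
        lookup_monomial[OF that] by simp
    thus ?thesis using rel_cls by (simp add: P_def peval_sum cong: sum.cong)
  qed
  moreover have "P \<noteq> 0"
  proof -
    obtain \<alpha>0 where \<alpha>0: "\<alpha>0 \<in> M" "\<not> meq S (c \<alpha>0) (\<lambda>_. 0)" using M(4) by blast
    have "lookup P (Abs_poly_mapping \<alpha>0) = (\<Sum>\<alpha>\<in>M. if \<alpha> = \<alpha>0 then cls (c \<alpha>0) else 0)"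
      unfolding lookup_P using \<alpha>0(1) lookup_monomial
      by (intro sum.cong refl) (auto simp: when_def, metis)
    also have "\<dots> = cls (c \<alpha>0)" using \<alpha>0(1) M(1) by simp
    also have "\<dots> \<noteq> 0" using \<alpha>0 c_mero cls_eq_0_iff by blast
    finally show ?thesis by auto
  qed
  ultimately show ?thesis by blast
qed

lemma annihilator_imp_dependent:
  assumes P: "P \<noteq> 0" "coeffs_in FL P" "vars_in (grid m) P" "peval P W = 0"
  shows "diff_alg_dependent S \<delta>f F n z"
proof -
  define M where "M = lookup ` keys P"
  define c where "c \<alpha> = (SOME f. f \<in> F \<and> cls f = lookup P (Abs_poly_mapping \<alpha>))" for \<alpha>
  have c: "c (lookup \<mu>) \<in> F" "cls (c (lookup \<mu>)) = lookup P \<mu>" for \<mu>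
  proof -
    have "lookup P \<mu> \<in> cls ` F" using P(2) by (simp add: coeffs_in_def FL_def)
    hence "\<exists>f. f \<in> F \<and> cls f = lookup P \<mu>" by (metis imageE)
    thus "c (lookup \<mu>) \<in> F" "cls (c (lookup \<mu>)) = lookup P \<mu>"
      using someI_ex[of "\<lambda>f. f \<in> F \<and> cls f = lookup P \<mu>"] by (simp_all add: c_def lookup_inverse)
  qed
  have inj: "inj_on lookup (keys P)" by (simp add: inj_on_def poly_mapping_eqI)
  have "(\<Sum>\<alpha>\<in>M. cls (c \<alpha>) * (\<Prod>v\<in>grid m. W v ^ \<alpha> v)) =
      (\<Sum>\<mu>\<in>keys P. cls (c (lookup \<mu>)) * (\<Prod>v\<in>grid m. W v ^ lookup \<mu> v))"
    unfolding M_def by (simp add: sum.reindex[OF inj])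
  also have "\<dots> = (\<Sum>\<mu>\<in>keys P. lookup P \<mu> * monom_val \<mu> W)"
  proof (intro sum.cong refl)
    fix \<mu> assume "\<mu> \<in> keys P"
    hence "keys \<mu> \<subseteq> grid m" using P(3) by (auto simp: vars_in_def)
    thus "cls (c (lookup \<mu>)) * (\<Prod>v\<in>grid m. W v ^ lookup \<mu> v) = lookup P \<mu> * monom_val \<mu> W"
      using monom_val_superset[of "grid m" \<mu> W] by (simp add: c(2))
  qed
  also have "\<dots> = 0" using P(4) by (simp add: peval_def)
  finally have rel_cls: "(\<Sum>\<alpha>\<in>M. cls (c \<alpha>) * (\<Prod>v\<in>grid m. W v ^ \<alpha> v)) = 0" .
  have c_mero: "\<And>\<alpha>. \<alpha> \<in> M \<Longrightarrow> c \<alpha> meromorphic_on S" using c(1) F_mero by (auto simp: M_def)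
  note expr = cls_differential_poly[of M c m, OF c_mero]
  show ?thesis unfolding diff_alg_dependent_def
  proof (intro exI conjI)
    show "finite M" by (simp add: M_def)
    show "M \<subseteq> {\<alpha>. \<forall>i k. \<alpha> (i, k) \<noteq> 0 \<longrightarrow> i < n \<and> k \<le> m}"
    proof
      fix \<alpha> assume "\<alpha> \<in> M"
      then obtain \<mu> where \<mu>: "\<mu> \<in> keys P" "\<alpha> = lookup \<mu>" by (auto simp: M_def)
      hence "keys \<mu> \<subseteq> grid m" using P(3) by (auto simp: vars_in_def)
      thus "\<alpha> \<in> {\<alpha>. \<forall>i k. \<alpha> (i, k) \<noteq> 0 \<longrightarrow> i < n \<and> k \<le> m}"
        using \<mu>(2) by (auto simp: in_keys_iff subset_iff)
    qed
    show "\<forall>\<alpha>\<in>M. c \<alpha> \<in> F" using c(1) by (auto simp: M_def)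
    obtain \<mu> where "\<mu> \<in> keys P" using P(1) by (metis keys_eq_empty ex_in_conv)
    hence "cls (c (lookup \<mu>)) \<noteq> 0" by (simp add: c(2) in_keys_iff)
    thus "\<exists>\<alpha>\<in>M. \<not> meq S (c \<alpha>) (\<lambda>_. 0)"
      using \<open>\<mu> \<in> keys P\<close> c_mero cls_eq_0_iff by (auto simp: M_def)
    show "meq S (\<lambda>w. \<Sum>\<alpha>\<in>M. c \<alpha> w * (\<Prod>(i, k)\<in>grid m. ((\<delta>f ^^ k) (z i) w) ^ \<alpha> (i, k))) (\<lambda>_. 0)"
      using rel_cls expr cls_eq_0_iff by simp
  qed
qed

text \<open>A telescoper is the same as a nontrivial constant-coefficient linear combination of the
  \<open>W\<close> lying in \<open>FL\<close>: applying \<open>\<sigma>\<close> to such a combination adds the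
  corresponding combination of the \<open>B\<close>.\<close>

lemma \<sigma>_linear_W:
  assumes "\<forall>v\<in>grid m. \<sigma> (k v) = k v"
  shows "\<sigma> (\<Sum>v\<in>grid m. k v * W v) = (\<Sum>v\<in>grid m. k v * W v) + (\<Sum>v\<in>grid m. k v * B v)"
proof -
  have "\<sigma> (\<Sum>v\<in>grid m. k v * W v) = (\<Sum>v\<in>grid m. k v * (W v + B v))"
    using assms by (auto simp: FL.\<sigma>_sum \<sigma>_mult \<sigma>_W intro!: sum.cong)
  thus ?thesis by (simp add: distrib_left sum.distrib)
qed

lemma telescoper_imp_linear:
  assumes "telescoper_exists S \<sigma>f \<delta>f F n a"
  shows "\<exists>m k. (\<forall>v\<in>grid m. \<sigma> (k v) = k v) \<and> (\<exists>v\<in>grid m. k v \<noteq> 0) \<and> (\<Sum>v\<in>grid m. k v * W v) \<in> FL"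
proof -
  obtain m c f where c: "\<forall>i<n. \<forall>k\<le>m. c i k \<in> F \<and> meq S (\<sigma>f (c i k)) (c i k)"
    and nz: "\<exists>i<n. \<exists>k\<le>m. \<not> meq S (c i k) (\<lambda>_. 0)" and f: "f \<in> F"
    and L: "meq S (\<lambda>w. \<Sum>i<n. \<Sum>k\<le>m. c i k w * (\<delta>f ^^ k) (a i) w) (\<lambda>w. \<sigma>f f w - f w)"
    using assms unfolding telescoper_exists_def by blast
  define k where "k v = cls (c (fst v) (snd v))" for v
  have c_mero: "\<And>i j. i < n \<Longrightarrow> j \<le> m \<Longrightarrow> c i j meromorphic_on S" using c F_mero by blast
  have a_mero: "\<And>i. i < n \<Longrightarrow> a i meromorphic_on S" using a_F F_mero by blast
  have f_mero: "f meromorphic_on S" using f F_mero by blast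
  have k_fixed: "\<forall>v\<in>grid m. \<sigma> (k v) = k v"
    using c c_mero by (auto simp: k_def \<sigma>_fixed_iff)
  have "\<exists>v\<in>grid m. k v \<noteq> 0"
    using nz c_mero by (force simp: k_def cls_eq_0_iff)
  moreover have "(\<Sum>v\<in>grid m. k v * W v) \<in> FL"
  proof -
    note L_cls = cls_linear_differential[of m c a, OF c_mero a_mero]
    have "cls (\<lambda>w. \<Sum>i<n. \<Sum>k\<le>m. c i k w * (\<delta>f ^^ k) (a i) w) = cls (\<lambda>w. \<sigma>f f w - f w)"
      using L L_cls(1) f_mero \<sigma>f_mero by (subst cls_eq_iff) (auto intro!: meromorphic_intros)
    hence "(\<Sum>v\<in>grid m. k v * B v) = \<sigma> (cls f) - cls f"
      using L_cls(2) f_mero by (simp add: k_def B_def cls_diff \<sigma>f_mero \<sigma>_cls)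
    hence "\<sigma> ((\<Sum>v\<in>grid m. k v * W v) - cls f) = (\<Sum>v\<in>grid m. k v * W v) - cls f"
      using \<sigma>_linear_W[OF k_fixed] by (simp add: FL.\<sigma>_diff)
    hence "(\<Sum>v\<in>grid m. k v * W v) - cls f \<in> FL" by (rule FL.constants_in_F)
    moreover have "cls f \<in> FL" using f by (simp add: FL_def)
    ultimately show ?thesis using FL.F_add by fastforce
  qed
  ultimately show ?thesis using k_fixed by blast
qed

lemma linear_imp_telescoper:
  assumes k: "\<forall>v\<in>grid m. \<sigma> (k v) = k v" "\<exists>v\<in>grid m. k v \<noteq> 0" "(\<Sum>v\<in>grid m. k v * W v) \<in> FL"
  shows "telescoper_exists S \<sigma>f \<delta>f F n a"
proof -
  have "\<forall>v\<in>grid m. \<exists>g. g \<in> F \<and> cls g = k v"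
    using k(1) FL.constants_in_F by (force simp: FL_def)
  then obtain cf where cf: "\<And>v. v \<in> grid m \<Longrightarrow> cf v \<in> F \<and> cls (cf v) = k v" by metis
  obtain f where f: "f \<in> F" "cls f = (\<Sum>v\<in>grid m. k v * W v)" using k(3) by (auto simp: FL_def)
  define c where "c i j = cf (i, j)" for i j
  have c_mero: "\<And>i j. i < n \<Longrightarrow> j \<le> m \<Longrightarrow> c i j meromorphic_on S"
    using cf F_mero by (auto simp: c_def)
  have a_mero: "\<And>i. i < n \<Longrightarrow> a i meromorphic_on S" using a_F F_mero by blast
  have f_mero: "f meromorphic_on S" using f F_mero by blast
  show ?thesis unfolding telescoper_exists_def
  proof (rule exI[of _ m], rule exI[of _ c], rule exI[of _ f], intro conjI allI impI)
    fix i j assume ij: "i < n" "j \<le> m"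
    show "c i j \<in> F" using cf[of "(i, j)"] ij by (simp add: c_def)
  next
    fix i j assume ij: "i < n" "j \<le> m"
    show "meq S (\<sigma>f (c i j)) (c i j)"
      using cf[of "(i, j)"] ij k(1) c_mero[OF ij] by (simp add: c_def flip: \<sigma>_fixed_iff)
  next
    obtain v where v: "v \<in> grid m" "k v \<noteq> 0" using k(2) by blast
    hence "\<not> meq S (cf v) (\<lambda>_. 0)" using cf[OF v(1)] F_mero cls_eq_0_iff by metis
    thus "\<exists>i<n. \<exists>j\<le>m. \<not> meq S (c i j) (\<lambda>_. 0)"
      using v(1) by (intro exI[of _ "fst v"] exI[of _ "snd v"]) (auto simp: c_def)
  next
    show "f \<in> F" by fact
  next
    note L_cls = cls_linear_differential[of m c a, OF c_mero a_mero]
    have "cls (\<lambda>w. \<sigma>f f w - f w) = \<sigma> (cls f) - cls f"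
      using f_mero by (simp add: cls_diff \<sigma>f_mero \<sigma>_cls)
    also have "\<dots> = (\<Sum>v\<in>grid m. k v * B v)"
      using \<sigma>_linear_W[OF k(1)] f(2) by simp
    also have "\<dots> = (\<Sum>v\<in>grid m. cls (c (fst v) (snd v)) * B v)"
      using cf by (auto simp: c_def intro!: sum.cong)
    also have "\<dots> = cls (\<lambda>w. \<Sum>i<n. \<Sum>j\<le>m. c i j w * (\<delta>f ^^ j) (a i) w)"
      by (simp add: L_cls(2) B_def)
    finally have "cls (\<lambda>w. \<sigma>f f w - f w) = cls (\<lambda>w. \<Sum>i<n. \<Sum>j\<le>m. c i j w * (\<delta>f ^^ j) (a i) w)" .
    moreover have "(\<lambda>w. \<sigma>f f w - f w) meromorphic_on S"
      using f_mero \<sigma>f_mero by (intro meromorphic_intros) auto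
    ultimately show "meq S (\<lambda>w. \<Sum>i<n. \<Sum>j\<le>m. c i j w * (\<delta>f ^^ j) (a i) w) (\<lambda>w. \<sigma>f f w - f w)"
      using cls_eq_iff[OF L_cls(1), of "\<lambda>w. \<sigma>f f w - f w"] by (simp add: eq_commute)
  qed
qed

theorem dependent_iff_telescoper:
  "diff_alg_dependent S \<delta>f F n z \<longleftrightarrow> telescoper_exists S \<sigma>f \<delta>f F n a"
proof
  assume "diff_alg_dependent S \<delta>f F n z"
  then obtain m P where P: "P \<noteq> 0" "coeffs_in FL P" "vars_in (grid m) P" "peval P W = 0"
    using dependent_imp_annihilator by blast
  interpret O: ostrowski_setting FL \<sigma> "grid m" W B by (rule ostrowski_setting_grid)
  from O.ostrowski[of P] P obtain k where
    "\<forall>v\<in>grid m. \<sigma> (k v) = k v" "\<exists>v\<in>grid m. k v \<noteq> 0" "(\<Sum>v\<in>grid m. k v * W v) \<in> FL"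
    by (auto simp: O.annihilator_def)
  thus "telescoper_exists S \<sigma>f \<delta>f F n a" by (rule linear_imp_telescoper)
next
  assume "telescoper_exists S \<sigma>f \<delta>f F n a"
  then obtain m k j where k: "\<forall>v\<in>grid m. \<sigma> (k v) = k v" "j \<in> grid m" "k j \<noteq> 0"
      "(\<Sum>v\<in>grid m. k v * W v) \<in> FL"
    using telescoper_imp_linear by blast
  interpret O: ostrowski_setting FL \<sigma> "grid m" W B by (rule ostrowski_setting_grid)
  show "diff_alg_dependent S \<delta>f F n z"
    using O.linear_relation_annihilator[OF k] by (intro annihilator_imp_dependent) (auto simp: O.annihilator_def)
qed

end

end

section \<open>The two concrete settings\<close>

quotient_type mero_plane = "complex \<Rightarrow> complex" / partial: "mrel (UNIV :: complex set)"
  morphisms rep_plane Abs_plane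
  by (rule part_equivp_mrel)

instantiation mero_plane :: field
begin

lift_definition zero_mero_plane :: mero_plane is "\<lambda>_. 0" by (rule mrel_const)
lift_definition one_mero_plane :: mero_plane is "\<lambda>_. 1" by (rule mrel_const)
lift_definition plus_mero_plane :: "mero_plane \<Rightarrow> mero_plane \<Rightarrow> mero_plane"
  is "\<lambda>f g w. f w + g w" by (rule mrel_add)
lift_definition uminus_mero_plane :: "mero_plane \<Rightarrow> mero_plane"
  is "\<lambda>f w. - f w" by (rule mrel_uminus)
lift_definition minus_mero_plane :: "mero_plane \<Rightarrow> mero_plane \<Rightarrow> mero_plane"
  is "\<lambda>f g w. f w - g w" unfolding diff_conv_add_uminus by (intro mrel_add mrel_uminus)
lift_definition times_mero_plane :: "mero_plane \<Rightarrow> mero_plane \<Rightarrow> mero_plane"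
  is "\<lambda>f g w. f w * g w" by (rule mrel_mult)
lift_definition inverse_mero_plane :: "mero_plane \<Rightarrow> mero_plane"
  is "\<lambda>f w. inverse (f w)" by (rule mrel_inverse)
definition divide_mero_plane :: "mero_plane \<Rightarrow> mero_plane \<Rightarrow> mero_plane"
  where "x div y = x * inverse y" for x y :: mero_plane

instance
proof
  fix a b c :: mero_plane
  show "a + b + c = a + (b + c)" "a + b = b + a" "0 + a = a" "- a + a = 0" "a - b = a + - b"
    "a * b * c = a * (b * c)" "a * b = b * a" "1 * a = a" "(a + b) * c = a * c + b * c"
    "inverse (0 :: mero_plane) = 0"
    by (transfer; auto simp: mrel_def meq_def algebra_simps intro!: meromorphic_intros)+
  show "a div b = a * inverse b" by (simp add: divide_mero_plane_def)
  show "(0 :: mero_plane) \<noteq> 1" by transfer (simp add: mrel_def meq_const_iff)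
  show "a \<noteq> 0 \<Longrightarrow> inverse a * a = 1"
    by transfer (rule mrel_inverse_mult, auto)
qed

end

lemma Abs_plane_eq_iff:
  "f meromorphic_on UNIV \<Longrightarrow> g meromorphic_on UNIV \<Longrightarrow> Abs_plane f = Abs_plane g \<longleftrightarrow> meq UNIV f g"
  using Quotient_rel[OF Quotient_mero_plane, of f g] by (auto simp: mrel_def meq_refl)

lemma Abs_plane_surj: "\<exists>f. f meromorphic_on UNIV \<and> x = Abs_plane f"
  using Quotient_rep_reflp[OF Quotient_mero_plane, of x] Quotient_abs_rep[OF Quotient_mero_plane, of x]
  by (auto simp: mrel_def)

instance mero_plane :: field_char_0
proof
  have "of_nat k = Abs_plane (\<lambda>_. of_nat k)" for k
    by (induction k) (simp_all add: zero_mero_plane_def one_mero_plane_def plus_mero_plane.abs_eq mrel_const)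
  thus "inj (of_nat :: nat \<Rightarrow> mero_plane)"
    by (auto intro!: injI simp: Abs_plane_eq_iff meq_const_iff meromorphic_on_const)
qed

quotient_type mero_punctured = "complex \<Rightarrow> complex" / partial: "mrel (- {0 :: complex})"
  morphisms rep_punctured Abs_punctured
  by (rule part_equivp_mrel)

lemma punctured_plane: "open (- {0 :: complex})" "connected (- {0 :: complex})" "- {0 :: complex} \<noteq> {}"
  by (auto simp: open_Compl connected_punctured_universe)

instantiation mero_punctured :: field
begin

lift_definition zero_mero_punctured :: mero_punctured is "\<lambda>_. 0" by (rule mrel_const)
lift_definition one_mero_punctured :: mero_punctured is "\<lambda>_. 1" by (rule mrel_const)
lift_definition plus_mero_punctured :: "mero_punctured \<Rightarrow> mero_punctured \<Rightarrow> mero_punctured"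
  is "\<lambda>f g w. f w + g w" by (rule mrel_add)
lift_definition uminus_mero_punctured :: "mero_punctured \<Rightarrow> mero_punctured"
  is "\<lambda>f w. - f w" by (rule mrel_uminus)
lift_definition minus_mero_punctured :: "mero_punctured \<Rightarrow> mero_punctured \<Rightarrow> mero_punctured"
  is "\<lambda>f g w. f w - g w" unfolding diff_conv_add_uminus by (intro mrel_add mrel_uminus)
lift_definition times_mero_punctured :: "mero_punctured \<Rightarrow> mero_punctured \<Rightarrow> mero_punctured"
  is "\<lambda>f g w. f w * g w" by (rule mrel_mult)
lift_definition inverse_mero_punctured :: "mero_punctured \<Rightarrow> mero_punctured"
  is "\<lambda>f w. inverse (f w)" by (rule mrel_inverse)
definition divide_mero_punctured :: "mero_punctured \<Rightarrow> mero_punctured \<Rightarrow> mero_punctured"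
  where "x div y = x * inverse y" for x y :: mero_punctured

instance
proof
  fix a b c :: mero_punctured
  show "a + b + c = a + (b + c)" "a + b = b + a" "0 + a = a" "- a + a = 0" "a - b = a + - b"
    "a * b * c = a * (b * c)" "a * b = b * a" "1 * a = a" "(a + b) * c = a * c + b * c"
    "inverse (0 :: mero_punctured) = 0"
    by (transfer; auto simp: mrel_def meq_def algebra_simps intro!: meromorphic_intros)+
  show "a div b = a * inverse b" by (simp add: divide_mero_punctured_def)
  show "(0 :: mero_punctured) \<noteq> 1" by transfer (simp add: mrel_def meq_const_iff punctured_plane)
  show "a \<noteq> 0 \<Longrightarrow> inverse a * a = 1"
    by transfer (rule mrel_inverse_mult, auto simp: punctured_plane)
qed

end

lemma Abs_punctured_eq_iff:
  "f meromorphic_on (- {0}) \<Longrightarrow> g meromorphic_on (- {0}) \<Longrightarrow>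
    Abs_punctured f = Abs_punctured g \<longleftrightarrow> meq (- {0}) f g"
  using Quotient_rel[OF Quotient_mero_punctured, of f g] by (auto simp: mrel_def meq_refl)

lemma Abs_punctured_surj: "\<exists>f. f meromorphic_on (- {0}) \<and> x = Abs_punctured f"
  using Quotient_rep_reflp[OF Quotient_mero_punctured, of x]
    Quotient_abs_rep[OF Quotient_mero_punctured, of x]
  by (auto simp: mrel_def)

instance mero_punctured :: field_char_0
proof
  have "of_nat k = Abs_punctured (\<lambda>_. of_nat k)" for k
    by (induction k) (simp_all add: zero_mero_punctured_def one_mero_punctured_def plus_mero_punctured.abs_eq mrel_const)
  thus "inj (of_nat :: nat \<Rightarrow> mero_punctured)"
    by (auto intro!: injI simp: Abs_punctured_eq_iff meq_const_iff punctured_plane meromorphic_on_const)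
qed

lemma mero_model_setting1:
  assumes "setting1 F"
  shows "mero_model UNIV Abs_plane tau D1 F"
proof
  fix f g :: "complex \<Rightarrow> complex" and c :: complex
  show "tau (\<lambda>w. f w + g w) = (\<lambda>w. tau f w + tau g w)"
    "tau (\<lambda>w. f w * g w) = (\<lambda>w. tau f w * tau g w)" "tau (\<lambda>_. c) = (\<lambda>_. c)"
    by (simp_all add: tau_def)
  show "meq UNIV f g \<Longrightarrow> meq UNIV (tau f) (tau g)"
    using meq_affine[of 1 UNIV 1 f g] by (simp add: tau_def add.commute)
  show "meq UNIV f g \<Longrightarrow> meq UNIV (D1 f) (D1 g)" by (simp add: D1_def meq_deriv)
  assume f: "f meromorphic_on UNIV"
  show "tau f meromorphic_on UNIV"
    using mero_affine[OF f, of 1 1] by (simp add: tau_def add.commute)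
  show "D1 f meromorphic_on UNIV" unfolding D1_def by (rule meromorphic_on_deriv[OF f])
  show "meq UNIV (D1 (tau f)) (tau (D1 f))"
    using meq_deriv_affine[OF f, of 1 1] by (simp add: D1_def tau_def add.commute)
  show "Abs_plane (\<lambda>w. - f w) = - Abs_plane f" "Abs_plane (\<lambda>w. inverse (f w)) = inverse (Abs_plane f)"
    using f by (simp_all add: uminus_mero_plane.abs_eq inverse_mero_plane.abs_eq mrel_def meq_refl)
  assume g: "g meromorphic_on UNIV"
  show "Abs_plane f = Abs_plane g \<longleftrightarrow> meq UNIV f g" using f g by (rule Abs_plane_eq_iff)
  show "Abs_plane (\<lambda>w. f w + g w) = Abs_plane f + Abs_plane g"
    "Abs_plane (\<lambda>w. f w * g w) = Abs_plane f * Abs_plane g"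
    using f g by (simp_all add: plus_mero_plane.abs_eq times_mero_plane.abs_eq mrel_def meq_refl)
  show "meq UNIV (D1 (\<lambda>w. f w + g w)) (\<lambda>w. D1 f w + D1 g w)"
    unfolding D1_def using f g by (rule meq_deriv_add)
next
  fix p assume "p meromorphic_on UNIV" "meq UNIV (tau p) p"
  thus "p \<in> F" using assms by (simp add: setting1_def mero_on_iff)
qed (use assms in \<open>auto simp: setting1_def zero_mero_plane_def one_mero_plane_def Abs_plane_surj\<close>)

lemma mero_model_setting2:
  assumes "setting2 q F" "q \<noteq> 0"
  shows "mero_model (- {0}) Abs_punctured (sigq q) D2 F"
proof
  fix f g :: "complex \<Rightarrow> complex" and c :: complex
  have dilation: "w \<in> - {0} \<Longrightarrow> q * w + 0 \<in> - {0}" for w using assms(2) by simp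
  show "sigq q (\<lambda>w. f w + g w) = (\<lambda>w. sigq q f w + sigq q g w)"
    "sigq q (\<lambda>w. f w * g w) = (\<lambda>w. sigq q f w * sigq q g w)" "sigq q (\<lambda>_. c) = (\<lambda>_. c)"
    by (simp_all add: sigq_def)
  show "meq (- {0}) f g \<Longrightarrow> meq (- {0}) (sigq q f) (sigq q g)"
    using meq_affine[of q "- {0}" 0 f g] dilation assms(2) by (simp add: sigq_def)
  show "meq (- {0}) f g \<Longrightarrow> meq (- {0}) (D2 f) (D2 g)"
    unfolding D2_def by (intro meq_mult_left meq_deriv)
  assume f: "f meromorphic_on (- {0})"
  show "sigq q f meromorphic_on (- {0})"
    using mero_affine[OF f, of q 0] dilation by (simp add: sigq_def)
  show "D2 f meromorphic_on (- {0})"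
    unfolding D2_def by (intro meromorphic_intros meromorphic_on_deriv f)
  show "meq (- {0}) (D2 (sigq q f)) (sigq q (D2 f))"
    using meq_mult_left[OF meq_deriv_affine[OF f assms(2) dilation], of "\<lambda>w. w"]
    by (simp add: D2_def sigq_def mult_ac)
  show "Abs_punctured (\<lambda>w. - f w) = - Abs_punctured f"
    "Abs_punctured (\<lambda>w. inverse (f w)) = inverse (Abs_punctured f)"
    using f by (simp_all add: uminus_mero_punctured.abs_eq inverse_mero_punctured.abs_eq mrel_def meq_refl)
  assume g: "g meromorphic_on (- {0})"
  show "Abs_punctured f = Abs_punctured g \<longleftrightarrow> meq (- {0}) f g" using f g by (rule Abs_punctured_eq_iff)
  show "Abs_punctured (\<lambda>w. f w + g w) = Abs_punctured f + Abs_punctured g"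
    "Abs_punctured (\<lambda>w. f w * g w) = Abs_punctured f * Abs_punctured g"
    using f g by (simp_all add: plus_mero_punctured.abs_eq times_mero_punctured.abs_eq mrel_def meq_refl)
  show "meq (- {0}) (D2 (\<lambda>w. f w + g w)) (\<lambda>w. D2 f w + D2 g w)"
    using meq_mult_left[OF meq_deriv_add[OF f g], of "\<lambda>w. w"] by (simp add: D2_def distrib_left)
next
  fix p assume "p meromorphic_on (- {0})" "meq (- {0}) (sigq q p) p"
  thus "p \<in> F" using assms by (simp add: setting2_def mero_on_iff punctured_plane)
qed (use assms in \<open>auto simp: setting2_def punctured_plane zero_mero_punctured_def
      one_mero_punctured_def Abs_punctured_surj\<close>)

theorem mainTheorem5:
  shows "(\<forall>F n (a :: nat \<Rightarrow> complex \<Rightarrow> complex) z.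
            setting1 F \<and>
            (\<forall>i<n. a i \<in> F \<and> \<not> meq UNIV (a i) (\<lambda>_. 0)) \<and>
            (\<forall>i<n. mero_on UNIV (z i) \<and> meq UNIV (\<lambda>w. tau (z i) w - z i w) (a i))
            \<longrightarrow> (diff_alg_dependent UNIV D1 F n z \<longleftrightarrow> telescoper_exists UNIV tau D1 F n a))
       \<and> (\<forall>q F n (a :: nat \<Rightarrow> complex \<Rightarrow> complex) z.
            q \<noteq> 0 \<and> norm q \<noteq> 1 \<and> setting2 q F \<and>
            (\<forall>i<n. a i \<in> F \<and> \<not> meq (- {0}) (a i) (\<lambda>_. 0)) \<and>
            (\<forall>i<n. mero_on (- {0}) (z i) \<and> meq (- {0}) (\<lambda>w. sigq q (z i) w - z i w) (a i))
            \<longrightarrow> (diff_alg_dependent (- {0}) D2 F n z \<longleftrightarrow> telescoper_exists (- {0}) (sigq q) D2 F n a))"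
proof (intro conjI allI impI)
  fix F n and a z :: "nat \<Rightarrow> complex \<Rightarrow> complex"
  assume H: "setting1 F \<and> (\<forall>i<n. a i \<in> F \<and> \<not> meq UNIV (a i) (\<lambda>_. 0)) \<and>
    (\<forall>i<n. mero_on UNIV (z i) \<and> meq UNIV (\<lambda>w. tau (z i) w - z i w) (a i))"
  interpret mero_model UNIV Abs_plane tau D1 F
    using H by (intro mero_model_setting1) simp
  show "diff_alg_dependent UNIV D1 F n z \<longleftrightarrow> telescoper_exists UNIV tau D1 F n a"
    by (rule dependent_iff_telescoper) (use H in \<open>auto simp: mero_on_iff\<close>)
next
  fix q F n and a z :: "nat \<Rightarrow> complex \<Rightarrow> complex"
  assume H: "q \<noteq> 0 \<and> norm q \<noteq> 1 \<and> setting2 q F \<and>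
    (\<forall>i<n. a i \<in> F \<and> \<not> meq (- {0}) (a i) (\<lambda>_. 0)) \<and>
    (\<forall>i<n. mero_on (- {0}) (z i) \<and> meq (- {0}) (\<lambda>w. sigq q (z i) w - z i w) (a i))"
  interpret mero_model "- {0}" Abs_punctured "sigq q" D2 F
    using H by (intro mero_model_setting2) simp_all
  show "diff_alg_dependent (- {0}) D2 F n z \<longleftrightarrow> telescoper_exists (- {0}) (sigq q) D2 F n a"
    by (rule dependent_iff_telescoper) (use H in \<open>auto simp: mero_on_iff punctured_plane\<close>)
qed

end
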